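(* Assume $Q$ has no oriented cycle. For each $i\in Q_0$ the real $(1,1)$-form $\mathbf i\,\partial\bar\partial\log\det(\rho_i\rho_i^* )$ on $R^s_{\vec n,\vec d}$ is $\mathrm{GL}_{\vec d}$-invariant and positive semidefinite, and the sum $\Omega=\mathbf i\sum_{i\in Q_0}\partial\bar\partial\log\det(\rho_i\rho_i^* )$ descends to a Kähler form on $\mathcal M_{\vec n,\vec d}$ (i.e. it is the pullback of a closed, positive definite real $(1,1)$-form on $\mathcal M_{\vec n,\vec d}$). Equivalently, the Ricci (first Chern) curvature form of the Hermitian metric on $\bigotimes_{i\in Q_0}\mathcal V_i$ (through $\bigotimes_i\det\mathcal V_i$) induced by the metrics $H_i=(\rho_i\rho_i^* )^{-1}$ defines a Kähler metric on $\mathcal M_{\vec n,\vec d}$.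
   Context: Let $Q$ be a finite quiver with vertex set $Q_0$, arrow set $Q_1$, and head/tail maps $h,t:Q_1\to Q_0$. Fix $\vec d,\vec n\in\mathbb Z_{\ge0}^{Q_0}$. Let $R_{\vec n,\vec d}=\bigoplus_{a\in Q_1}\mathrm{Hom}(\mathbb C^{d_{t(a)}},\mathbb C^{d_{h(a)}})\oplus\bigoplus_{i\in Q_0}\mathrm{Hom}(\mathbb C^{n_i},\mathbb C^{d_i})$, points $(V,e)=((V_a)_a,(e^{(i)})_i)$, with the action of $\mathrm{GL}_{\vec d}=\prod_i\mathrm{GL}(d_i,\mathbb C)$ given by $g\cdot(V,e)=((g_{h(a)}V_ag_{t(a)}^{-1})_a,(g_ie^{(i)})_i)$. $(V,e)$ is stable if there is no collection of subspaces $U_i\subseteq\mathbb C^{d_i}$, not all equal to $\mathbb C^{d_i}$, with $V_a(U_{t(a)})\subseteq U_{h(a)}$ and $\mathrm{Im}\,e^{(i)}\subseteq U_i$; $R^s_{\vec n,\vec d}$ is the stable locus, $\mathcal M_{\vec n,\vec d}=R^s_{\vec n,\vec d}/\mathrm{GL}_{\vec d}$ the (smooth) framed quiver moduli and $\mathcal V_i=(R^s_{\vec n,\vec d}\times\mathbb C^{d_i})/\mathrm{GL}_{\vec d}$ the universal bundles. For a path $\gamma=a_k\cdots a_1$, $V_\gamma=V_{a_k}\cdots V_{a_1}$, $h(\gamma)=h(a_k)$, $t(\gamma)=t(a_1)$ (trivial path at $i$: $V_\gamma=I_{d_i}$). $\rho_i$ is the block row matrix with blocks $V_\gamma e^{(t(\gamma))}$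 over all paths with $h(\gamma)=i$; its entries are polynomial (holomorphic) functions on $R_{\vec n,\vec d}$, and $\rho_i\rho_i^*$ is invertible on $R^s_{\vec n,\vec d}$; $H_i=(\rho_i\rho_i^* )^{-1}$ descends to a Hermitian metric on $\mathcal V_i$. *)

theory Defs
  imports "HOL-Analysis.Analysis" "Jordan_Normal_Form.Determinant"
begin

text \<open>A framed quiver representation point (V, e): V a is a d(h a) x d(t a) matrix,
 e i is a d i x n i matrix. Points of R are pairs of such families.\<close>

type_synonym ('v,'e) qpoint = "('e \<Rightarrow> complex mat) \<times> ('v \<Rightarrow> complex mat)"

definition wf_point :: "'v set \<Rightarrow> 'e set \<Rightarrow> ('e \<Rightarrow> 'v) \<Rightarrow> ('e \<Rightarrow> 'v)
   \<Rightarrow> ('v \<Rightarrow> nat) \<Rightarrow> ('v \<Rightarrow> nat) \<Rightarrow> ('v,'e) qpoint \<Rightarrow> bool" where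
  "wf_point Q0 Q1 h t n d x \<longleftrightarrow>
     (\<forall>a\<in>Q1. fst x a \<in> carrier_mat (d (h a)) (d (t a))) \<and>
     (\<forall>i\<in>Q0. snd x i \<in> carrier_mat (d i) (n i))"

text \<open>Paths: a start vertex j and a list of arrows [a1,...,ak] (a1 first).\<close>
fun is_path :: "('e \<Rightarrow> 'v) \<Rightarrow> ('e \<Rightarrow> 'v) \<Rightarrow> 'v \<Rightarrow> 'e list \<Rightarrow> bool" where
  "is_path h t j [] = True"
| "is_path h t j (a # as) = (t a = j \<and> is_path h t (h a) as)"

fun path_end :: "('e \<Rightarrow> 'v) \<Rightarrow> 'v \<Rightarrow> 'e list \<Rightarrow> 'v" where
  "path_end h j [] = j"
| "path_end h j (a # as) = path_end h (h a) as"

text \<open>V_gamma = V_ak * ... * V_a1 (identity for the trivial path at j).\<close>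
fun path_mat :: "('e \<Rightarrow> 'v) \<Rightarrow> ('v \<Rightarrow> nat) \<Rightarrow> ('e \<Rightarrow> complex mat) \<Rightarrow> 'v \<Rightarrow> 'e list \<Rightarrow> complex mat" where
  "path_mat h d V j [] = 1\<^sub>m (d j)"
| "path_mat h d V j (a # as) = path_mat h d V (h a) as * V a"

definition no_oriented_cycle :: "'v set \<Rightarrow> 'e set \<Rightarrow> ('e \<Rightarrow> 'v) \<Rightarrow> ('e \<Rightarrow> 'v) \<Rightarrow> bool" where
  "no_oriented_cycle Q0 Q1 h t \<longleftrightarrow>
     \<not> (\<exists>j as. j \<in> Q0 \<and> as \<noteq> [] \<and> set as \<subseteq> Q1 \<and> is_path h t j as \<and> path_end h j as = j)"

definition paths_to :: "'v set \<Rightarrow> 'e set \<Rightarrow> ('e \<Rightarrow> 'v) \<Rightarrow> ('e \<Rightarrow> 'v) \<Rightarrow> 'v \<Rightarrow> ('v \<times> 'e list) set" where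
  "paths_to Q0 Q1 h t i = {(j, as). j \<in> Q0 \<and> set as \<subseteq> Q1 \<and> is_path h t j as \<and> path_end h j as = i}"

text \<open>rho_i rho_i^* = sum over paths gamma with head i of B_gamma B_gamma^*, B_gamma = V_gamma e^(t gamma).\<close>
definition rhorho :: "'v set \<Rightarrow> 'e set \<Rightarrow> ('e \<Rightarrow> 'v) \<Rightarrow> ('e \<Rightarrow> 'v) \<Rightarrow> ('v \<Rightarrow> nat) \<Rightarrow> ('v \<Rightarrow> nat)
    \<Rightarrow> 'v \<Rightarrow> ('v,'e) qpoint \<Rightarrow> complex mat" where
  "rhorho Q0 Q1 h t n d i x = mat (d i) (d i) (\<lambda>(r, c).
     \<Sum>(j, as) \<in> paths_to Q0 Q1 h t i.
        let B = path_mat h d (fst x) j as * snd x j in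
        \<Sum>k < n j. B $$ (r, k) * cnj (B $$ (c, k)))"

text \<open>log det (rho_i rho_i^*)  (the determinant is real and positive on the stable locus).\<close>
definition logdet :: "'v set \<Rightarrow> 'e set \<Rightarrow> ('e \<Rightarrow> 'v) \<Rightarrow> ('e \<Rightarrow> 'v) \<Rightarrow> ('v \<Rightarrow> nat) \<Rightarrow> ('v \<Rightarrow> nat)
    \<Rightarrow> 'v \<Rightarrow> ('v,'e) qpoint \<Rightarrow> real" where
  "logdet Q0 Q1 h t n d i x = ln (Re (det (rhorho Q0 Q1 h t n d i x)))"

definition subspace_vec :: "nat \<Rightarrow> complex vec set \<Rightarrow> bool" where
  "subspace_vec m U \<longleftrightarrow> U \<subseteq> carrier_vec m \<and> 0\<^sub>v m \<in> U \<and>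
     (\<forall>u\<in>U. \<forall>w\<in>U. u + w \<in> U) \<and> (\<forall>c. \<forall>u\<in>U. c \<cdot>\<^sub>v u \<in> U)"

definition stable :: "'v set \<Rightarrow> 'e set \<Rightarrow> ('e \<Rightarrow> 'v) \<Rightarrow> ('e \<Rightarrow> 'v) \<Rightarrow> ('v \<Rightarrow> nat) \<Rightarrow> ('v \<Rightarrow> nat)
    \<Rightarrow> ('v,'e) qpoint \<Rightarrow> bool" where
  "stable Q0 Q1 h t n d x \<longleftrightarrow> wf_point Q0 Q1 h t n d x \<and>
     \<not> (\<exists>U :: 'v \<Rightarrow> complex vec set.
          (\<forall>i\<in>Q0. subspace_vec (d i) (U i)) \<and>
          (\<exists>i\<in>Q0. U i \<noteq> carrier_vec (d i)) \<and>
          (\<forall>a\<in>Q1. \<forall>u\<in>U (t a). fst x a *\<^sub>v u \<in> U (h a)) \<and>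
          (\<forall>i\<in>Q0. \<forall>w\<in>carrier_vec (n i). snd x i *\<^sub>v w \<in> U i))"

text \<open>GL_d elements, given together with their inverses k (g i * k i = k i * g i = 1).\<close>
definition is_GL :: "'v set \<Rightarrow> ('v \<Rightarrow> nat) \<Rightarrow> ('v \<Rightarrow> complex mat) \<Rightarrow> ('v \<Rightarrow> complex mat) \<Rightarrow> bool" where
  "is_GL Q0 d g k \<longleftrightarrow> (\<forall>i\<in>Q0. g i \<in> carrier_mat (d i) (d i) \<and> k i \<in> carrier_mat (d i) (d i) \<and>
      g i * k i = 1\<^sub>m (d i) \<and> k i * g i = 1\<^sub>m (d i))"

definition gl_act :: "('e \<Rightarrow> 'v) \<Rightarrow> ('e \<Rightarrow> 'v) \<Rightarrow> ('v \<Rightarrow> complex mat) \<Rightarrow> ('v \<Rightarrow> complex mat)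
    \<Rightarrow> ('v,'e) qpoint \<Rightarrow> ('v,'e) qpoint" where
  "gl_act h t g k x = ((\<lambda>a. g (h a) * fst x a * k (t a)), (\<lambda>i. g i * snd x i))"

definition padd :: "('v,'e) qpoint \<Rightarrow> complex \<Rightarrow> ('v,'e) qpoint \<Rightarrow> ('v,'e) qpoint" where
  "padd x c v = ((\<lambda>a. fst x a + c \<cdot>\<^sub>m fst v a), (\<lambda>i. snd x i + c \<cdot>\<^sub>m snd v i))"

text \<open>Levi form (value of the real (1,1)-form i ddbar F on the Hermitian square of the tangent
 vector v at x, up to the positive constant normalisation):
 d^2/dz dzbar of F(x + z v) at z = 0, i.e. one quarter of the Laplacian in z = s + i u.\<close>
definition levi :: "(('v,'e) qpoint \<Rightarrow> real) \<Rightarrow> ('v,'e) qpoint \<Rightarrow> ('v,'e) qpoint \<Rightarrow> real" where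
  "levi F x v = (deriv (deriv (\<lambda>s::real. F (padd x (complex_of_real s) v))) 0
               + deriv (deriv (\<lambda>s::real. F (padd x (\<i> * complex_of_real s) v))) 0) / 4"

text \<open>Tangent space of the GL_d-orbit at x: infinitesimal action of xi in gl_d.\<close>
definition in_orbit_tangent :: "'v set \<Rightarrow> 'e set \<Rightarrow> ('e \<Rightarrow> 'v) \<Rightarrow> ('e \<Rightarrow> 'v) \<Rightarrow> ('v \<Rightarrow> nat)
    \<Rightarrow> ('v,'e) qpoint \<Rightarrow> ('v,'e) qpoint \<Rightarrow> bool" where
  "in_orbit_tangent Q0 Q1 h t d x v \<longleftrightarrow> (\<exists>xi :: 'v \<Rightarrow> complex mat.
       (\<forall>i\<in>Q0. xi i \<in> carrier_mat (d i) (d i)) \<and>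
       (\<forall>a\<in>Q1. fst v a = xi (h a) * fst x a - fst x a * xi (t a)) \<and>
       (\<forall>i\<in>Q0. snd v i = xi i * snd x i))"

end

theory Submission
  imports Defs "HOL-Complex_Analysis.Complex_Analysis"
begin

text \<open>By Cauchy--Binet, \<open>det (\<rho>\<^sub>i \<rho>\<^sub>i\<^sup>*)\<close> is a positive multiple of \<open>\<Sum>\<^sub>f \<bar>M\<^sub>f\<bar>\<^sup>2\<close>, the sum
  over the maximal minors \<open>M\<^sub>f\<close> of \<open>\<rho>\<^sub>i\<close>, which depend holomorphically on the point (acyclicity
  makes \<open>\<rho>\<^sub>i\<close> a finite matrix). Along a complex line the Levi form of \<open>log \<Sum>\<^sub>f \<bar>M\<^sub>f\<bar>\<^sup>2\<close> is
  the Cauchy--Schwarz defect of the vectors \<open>(M\<^sub>f')\<close> and \<open>(M\<^sub>f)\<close> divided by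
  \<open>(\<Sum>\<^sub>f \<bar>M\<^sub>f\<bar>\<^sup>2)\<^sup>2\<close>. It is therefore nonnegative, and it is invariant under \<open>g \<in> GL\<^sub>d\<close>,
  which multiplies every \<open>M\<^sub>f\<close> by \<open>det g\<^sub>i\<close>.

  Stability makes the rows of every \<open>\<rho>\<^sub>j\<close> linearly independent, so some \<open>M\<^sub>f\<close> is nonzero.
  The defect then vanishes iff \<open>M\<^sub>f' = \<lambda> M\<^sub>f\<close> for all \<open>f\<close>, which by Cramer's rule happens iff
  \<open>\<rho>\<^sub>i' = \<xi>\<^sub>i \<rho>\<^sub>i\<close> for a matrix \<open>\<xi>\<^sub>i\<close>. Propagating \<open>\<rho>' = \<xi> \<rho>\<close> along the arrows, again using
  the independence of the rows, shows that it holds at all vertices exactly when the tangent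
  vector is \<open>(\<xi> V - V \<xi>, \<xi> e)\<close>, i.e. tangent to the orbit.\<close>

section \<open>Second derivatives and the Levi form at a point\<close>

definition has_second_deriv_0 :: "(real \<Rightarrow> real) \<Rightarrow> real \<Rightarrow> bool" where
  "has_second_deriv_0 f w \<longleftrightarrow> (\<exists>g. (\<forall>\<^sub>F s in nhds 0. (f has_real_derivative g s) (at s))
      \<and> (g has_real_derivative w) (at 0))"

lemma has_second_deriv_0_imp_deriv:
  assumes "has_second_deriv_0 f w"
  shows "deriv (deriv f) 0 = w"
proof -
  obtain g where ev: "\<forall>\<^sub>F s in nhds 0. (f has_real_derivative g s) (at s)"
    and gw: "(g has_real_derivative w) (at 0)"
    using assms unfolding has_second_deriv_0_def by blast
  have "\<forall>\<^sub>F s in nhds 0. deriv f s = g s"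
    using ev by (rule eventually_mono) (rule DERIV_imp_deriv)
  then have "(deriv f has_real_derivative w) (at 0)"
    using DERIV_cong_ev[of 0 0 "deriv f" g w w] gw by simp
  then show ?thesis by (rule DERIV_imp_deriv)
qed

lemma has_second_deriv_0_sum:
  assumes "finite I" "\<forall>i\<in>I. has_second_deriv_0 (f i) (w i)"
  shows "has_second_deriv_0 (\<lambda>s. \<Sum>i\<in>I. f i s) (\<Sum>i\<in>I. w i)"
proof -
  obtain g where g: "\<forall>i\<in>I. (\<forall>\<^sub>F s in nhds 0. (f i has_real_derivative g i s) (at s))
      \<and> (g i has_real_derivative w i) (at 0)"
    using bchoice[OF assms(2)[unfolded has_second_deriv_0_def]] by blast
  have "\<forall>\<^sub>F s in nhds 0. \<forall>i\<in>I. (f i has_real_derivative g i s) (at s)"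
    using g assms(1) by (simp add: eventually_ball_finite)
  then have "\<forall>\<^sub>F s in nhds 0. ((\<lambda>s. \<Sum>i\<in>I. f i s) has_real_derivative (\<Sum>i\<in>I. g i s)) (at s)"
    by (rule eventually_mono) (auto intro: DERIV_sum)
  moreover have "((\<lambda>s. \<Sum>i\<in>I. g i s) has_real_derivative (\<Sum>i\<in>I. w i)) (at 0)"
    using g by (auto intro: DERIV_sum)
  ultimately show ?thesis
    unfolding has_second_deriv_0_def by (intro exI[of _ "\<lambda>s. \<Sum>i\<in>I. g i s"]) auto
qed

lemma has_real_derivative_Re_of_real:
  assumes "(\<Psi> has_field_derivative D) (at (of_real s))"
  shows "((\<lambda>s. Re (\<Psi> (of_real s))) has_real_derivative Re D) (at s)"
proof -
  have "((\<lambda>x. \<Psi> (of_real x)) has_vector_derivative D) (at s)"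
    by (rule has_vector_derivative_real_field[OF assms])
  then show ?thesis unfolding has_vector_derivative_complex_iff by simp
qed

lemma has_second_deriv_0_ln_Re:
  assumes d1: "\<And>z. (\<Phi> has_field_derivative \<Phi>1 z) (at z)"
    and d2: "\<And>z. (\<Phi>1 has_field_derivative \<Phi>2 z) (at z)"
    and pos: "Re (\<Phi> 0) > 0"
  shows "has_second_deriv_0 (\<lambda>s. ln (Re (\<Phi> (of_real s))))
     ((Re (\<Phi>2 0) * Re (\<Phi> 0) - Re (\<Phi>1 0) * Re (\<Phi>1 0)) / (Re (\<Phi> 0) * Re (\<Phi> 0)))"
proof -
  define p where "p s = Re (\<Phi> (of_real s))" for s :: real
  define q where "q s = Re (\<Phi>1 (of_real s))" for s :: real
  have dp: "(p has_real_derivative q s) (at s)" for s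
    unfolding p_def q_def by (rule has_real_derivative_Re_of_real[OF d1])
  have dq: "(q has_real_derivative Re (\<Phi>2 (of_real s))) (at s)" for s
    unfolding q_def by (rule has_real_derivative_Re_of_real[OF d2])
  have "isCont p 0" using dp by (rule DERIV_isCont)
  then have "(p \<longlongrightarrow> p 0) (nhds 0)" by (simp add: isCont_def tendsto_at_iff_tendsto_nhds)
  moreover have "p 0 > 0" using pos by (simp add: p_def)
  ultimately have "\<forall>\<^sub>F s in nhds 0. p s > 0" by (rule order_tendstoD(1))
  then have "\<forall>\<^sub>F s in nhds 0. ((\<lambda>s. ln (p s)) has_real_derivative q s / p s) (at s)"
    by (rule eventually_mono) (use DERIV_chain2[OF DERIV_ln_divide dp] in simp)
  moreover have "((\<lambda>s. q s / p s) has_real_derivative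
      (Re (\<Phi>2 0) * p 0 - q 0 * q 0) / (p 0 * p 0)) (at 0)"
    using DERIV_divide[OF dq[of 0] dp[of 0]] \<open>p 0 > 0\<close> by simp
  ultimately show ?thesis unfolding has_second_deriv_0_def p_def q_def by auto
qed

text \<open>\<open>w\<close> is \<open>\<partial>\<^sup>2\<phi> / \<partial>z \<partial>(cnj z)\<close> at \<open>0\<close>, a quarter of the Laplacian of \<open>\<phi>\<close>.\<close>

definition has_levi_0 :: "(complex \<Rightarrow> real) \<Rightarrow> real \<Rightarrow> bool" where
  "has_levi_0 \<phi> w \<longleftrightarrow> (\<exists>w1 w2. has_second_deriv_0 (\<lambda>s. \<phi> (of_real s)) w1
      \<and> has_second_deriv_0 (\<lambda>s. \<phi> (\<i> * of_real s)) w2 \<and> w1 + w2 = 4 * w)"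

lemma levi_eqI:
  assumes "has_levi_0 (\<lambda>z. F (padd x z v)) w"
  shows "levi F x v = w"
  using assms has_second_deriv_0_imp_deriv unfolding has_levi_0_def levi_def by force

lemma has_levi_0_sum:
  assumes "finite I" "\<forall>i\<in>I. has_levi_0 (\<phi> i) (w i)"
  shows "has_levi_0 (\<lambda>z. \<Sum>i\<in>I. \<phi> i z) (\<Sum>i\<in>I. w i)"
proof -
  obtain w1 w2 where w: "\<forall>i\<in>I. has_second_deriv_0 (\<lambda>s. \<phi> i (of_real s)) (w1 i)
      \<and> has_second_deriv_0 (\<lambda>s. \<phi> i (\<i> * of_real s)) (w2 i) \<and> w1 i + w2 i = 4 * w i"
    using assms(2) unfolding has_levi_0_def by metis
  have "has_second_deriv_0 (\<lambda>s. \<Sum>i\<in>I. \<phi> i (of_real s)) (\<Sum>i\<in>I. w1 i)"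
    and "has_second_deriv_0 (\<lambda>s. \<Sum>i\<in>I. \<phi> i (\<i> * of_real s)) (\<Sum>i\<in>I. w2 i)"
    using w by (auto intro!: has_second_deriv_0_sum[OF assms(1)])
  moreover have "(\<Sum>i\<in>I. w1 i) + (\<Sum>i\<in>I. w2 i) = 4 * (\<Sum>i\<in>I. w i)"
    using w by (simp add: sum.distrib[symmetric] sum_distrib_left)
  ultimately show ?thesis unfolding has_levi_0_def by blast
qed

section \<open>The Cauchy--Schwarz defect and the Levi form of \<open>log \<parallel>G\<parallel>\<^sup>2\<close>\<close>

definition cs_defect :: "'k set \<Rightarrow> ('k \<Rightarrow> complex) \<Rightarrow> ('k \<Rightarrow> complex) \<Rightarrow> real" where
  "cs_defect K a b = (\<Sum>k\<in>K. (cmod (a k))\<^sup>2) * (\<Sum>k\<in>K. (cmod (b k))\<^sup>2)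
     - (cmod (\<Sum>k\<in>K. a k * cnj (b k)))\<^sup>2"

lemma cs_defect_cong:
  "(\<And>k. k \<in> K \<Longrightarrow> a k = a' k) \<Longrightarrow> (\<And>k. k \<in> K \<Longrightarrow> b k = b' k) \<Longrightarrow> cs_defect K a b = cs_defect K a' b'"
  unfolding cs_defect_def by simp

lemma mult_cnj_eq_cmod_sq: "z * cnj z = (complex_of_real (cmod z))\<^sup>2"
  by (metis complex_norm_square of_real_power)

lemma of_real_sum_cmod_sq: "of_real (\<Sum>k\<in>K. (cmod (a k))\<^sup>2) = (\<Sum>k\<in>K. a k * cnj (a k))"
  by (simp only: of_real_sum of_real_power mult_cnj_eq_cmod_sq)

lemma cs_defect_eq_dist:
  fixes a b :: "'k \<Rightarrow> complex"
  assumes S: "(\<Sum>k\<in>K. (cmod (b k))\<^sup>2) > 0"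
  defines "l \<equiv> (\<Sum>k\<in>K. a k * cnj (b k)) / of_real (\<Sum>k\<in>K. (cmod (b k))\<^sup>2)"
  shows "cs_defect K a b = (\<Sum>k\<in>K. (cmod (b k))\<^sup>2) * (\<Sum>k\<in>K. (cmod (a k - l * b k))\<^sup>2)"
proof -
  define S0 where "S0 = (\<Sum>k\<in>K. (cmod (b k))\<^sup>2)"
  define A where "A = (\<Sum>k\<in>K. a k * cnj (b k))"
  define N where "N = (\<Sum>k\<in>K. (cmod (a k))\<^sup>2)"
  have "of_real (\<Sum>k\<in>K. (cmod (a k - l * b k))\<^sup>2) = (\<Sum>k\<in>K. (a k - l * b k) * cnj (a k - l * b k))"
    by (rule of_real_sum_cmod_sq)
  also have "\<dots> = of_real N - cnj l * A - l * cnj A + l * cnj l * of_real S0"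
    unfolding N_def S0_def A_def of_real_sum_cmod_sq
    by (simp add: algebra_simps sum.distrib sum_subtractf sum_distrib_left)
  also have "\<dots> = of_real N - A * cnj A / of_real S0"
    unfolding l_def A_def[symmetric] S0_def[symmetric] using S unfolding S0_def
    by (simp add: field_simps)
  also have "\<dots> = of_real (N - (cmod A)\<^sup>2 / S0)"
    by (simp add: mult_cnj_eq_cmod_sq)
  finally have "(\<Sum>k\<in>K. (cmod (a k - l * b k))\<^sup>2) = N - (cmod A)\<^sup>2 / S0"
    using of_real_eq_iff by blast
  then show ?thesis
    using S unfolding cs_defect_def N_def[symmetric] S0_def[symmetric] A_def[symmetric]
    by (simp add: field_simps)
qed

lemma cs_defect_nonneg: "cs_defect K a b \<ge> 0"
proof (cases "(\<Sum>k\<in>K. (cmod (b k))\<^sup>2) > 0")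
  case True
  then show ?thesis by (simp add: cs_defect_eq_dist sum_nonneg)
next
  case False
  moreover have "(\<Sum>k\<in>K. (cmod (b k))\<^sup>2) \<ge> 0" by (simp add: sum_nonneg)
  ultimately have S0: "(\<Sum>k\<in>K. (cmod (b k))\<^sup>2) = 0" by linarith
  have "(\<Sum>k\<in>K. a k * cnj (b k)) = 0"
  proof (cases "finite K")
    case True
    then have "\<forall>k\<in>K. b k = 0" using S0 by (simp add: sum_nonneg_eq_0_iff)
    then show ?thesis by simp
  qed simp
  then show ?thesis unfolding cs_defect_def S0 by simp
qed

lemma cs_defect_eq_0_iff:
  assumes K: "finite K" and S: "(\<Sum>k\<in>K. (cmod (b k))\<^sup>2) > 0"
  shows "cs_defect K a b = 0 \<longleftrightarrow> (\<exists>l. \<forall>k\<in>K. a k = l * b k)"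
proof
  let ?l = "(\<Sum>k\<in>K. a k * cnj (b k)) / of_real (\<Sum>k\<in>K. (cmod (b k))\<^sup>2)"
  assume "cs_defect K a b = 0"
  then have "(\<Sum>k\<in>K. (cmod (a k - ?l * b k))\<^sup>2) = 0"
    using S by (simp add: cs_defect_eq_dist)
  then have "\<forall>k\<in>K. a k = ?l * b k"
    using K by (simp add: sum_nonneg_eq_0_iff)
  then show "\<exists>l. \<forall>k\<in>K. a k = l * b k" by blast
next
  assume "\<exists>l. \<forall>k\<in>K. a k = l * b k"
  then obtain l where l: "\<forall>k\<in>K. a k = l * b k" by blast
  then have "(\<Sum>k\<in>K. (cmod (a k))\<^sup>2) = (cmod l)\<^sup>2 * (\<Sum>k\<in>K. (cmod (b k))\<^sup>2)"
    by (simp add: sum_distrib_left norm_mult power_mult_distrib)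
  moreover have "(\<Sum>k\<in>K. a k * cnj (b k)) = l * of_real (\<Sum>k\<in>K. (cmod (b k))\<^sup>2)"
    using l by (simp add: of_real_sum_cmod_sq sum_distrib_left mult.assoc del: of_real_sum)
  then have "cmod (\<Sum>k\<in>K. a k * cnj (b k)) = cmod l * (\<Sum>k\<in>K. (cmod (b k))\<^sup>2)"
    using S by (simp add: norm_mult del: of_real_sum)
  ultimately show "cs_defect K a b = 0"
    unfolding cs_defect_def by (simp add: power2_eq_square)
qed

definition cnj_reflect :: "(complex \<Rightarrow> complex) \<Rightarrow> complex \<Rightarrow> complex" where
  "cnj_reflect G z = cnj (G (cnj z))"

lemma has_field_derivative_scaled:
  assumes "G holomorphic_on UNIV" "D = deriv G (w * z) * w"
  shows "((\<lambda>z. G (w * z)) has_field_derivative D) (at z)"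
  using DERIV_chain2[OF _ DERIV_cmult[OF DERIV_ident], of G] holomorphic_derivI[OF assms(1)] assms(2)
  by auto

lemma has_field_derivative_cnj_reflect_scaled:
  assumes "G holomorphic_on UNIV" "D = cnj_reflect (deriv G) (w * z) * w"
  shows "((\<lambda>z. cnj_reflect G (w * z)) has_field_derivative D) (at z)"
proof -
  have "(G has_field_derivative deriv G (cnj (w * z))) (at (cnj (w * z)))"
    using holomorphic_derivI[OF assms(1)] by auto
  from has_field_derivative_cnj_cnj[OF this]
  have "(cnj_reflect G has_field_derivative cnj_reflect (deriv G) (w * z)) (at (w * z))"
    unfolding cnj_reflect_def[abs_def] by (simp add: o_def)
  from DERIV_chain2[OF this DERIV_cmult[OF DERIV_ident]] assms(2) show ?thesis by simp
qed

text \<open>On the line \<open>c \<real>\<close>, \<open>\<bar>G (c s)\<bar>\<^sup>2 = G (c s) * cnj_reflect G (cnj c * s)\<close> extends to a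
  holomorphic function of \<open>s\<close>, so the complex chain rule applies.\<close>

lemma has_second_deriv_0_ln_sum_sq:
  fixes G :: "'k \<Rightarrow> complex \<Rightarrow> complex" and C :: real and c :: complex
  assumes hol: "\<forall>k\<in>K. G k holomorphic_on UNIV"
    and C: "C > 0" and S: "(\<Sum>k\<in>K. (cmod (G k 0))\<^sup>2) > 0"
  defines "S0 \<equiv> (\<Sum>k\<in>K. (cmod (G k 0))\<^sup>2)"
    and "T \<equiv> (\<Sum>k\<in>K. deriv (deriv (G k)) 0 * cnj (G k 0))"
    and "A \<equiv> (\<Sum>k\<in>K. deriv (G k) 0 * cnj (G k 0))"
    and "N \<equiv> (\<Sum>k\<in>K. deriv (G k) 0 * cnj (deriv (G k) 0))"
  shows "has_second_deriv_0 (\<lambda>s. ln (C * (\<Sum>k\<in>K. (cmod (G k (c * of_real s)))\<^sup>2)))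
     ((Re (c*c*T + 2*c*cnj c*N + cnj c * cnj c * cnj T) * S0 - (Re (c*A + cnj c * cnj A))\<^sup>2)/(S0*S0))"
proof -
  define G1 where "G1 k = deriv (G k)" for k
  define G2 where "G2 k = deriv (G1 k)" for k
  have hol1: "\<forall>k\<in>K. G1 k holomorphic_on UNIV"
    using hol unfolding G1_def by (auto intro: holomorphic_deriv)
  define c' where "c' = cnj c"
  define \<Phi> where "\<Phi> z = C * (\<Sum>k\<in>K. G k (c*z) * cnj_reflect (G k) (c'*z))" for z
  define \<Phi>1 where "\<Phi>1 z = C * (\<Sum>k\<in>K. G k (c*z) * (cnj_reflect (G1 k) (c'*z) * c')
      + G1 k (c*z) * c * cnj_reflect (G k) (c'*z))" for z
  define \<Phi>2 where "\<Phi>2 z = C * (\<Sum>k\<in>K. G k (c*z) * (cnj_reflect (G2 k) (c'*z) * c' * c')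
      + G1 k (c*z) * c * (cnj_reflect (G1 k) (c'*z) * c')
      + (G1 k (c*z) * c * (cnj_reflect (G1 k) (c'*z) * c') + G2 k (c*z) * c * c * cnj_reflect (G k) (c'*z)))" for z
  have d1: "(\<Phi> has_field_derivative \<Phi>1 z) (at z)" for z
    unfolding \<Phi>_def \<Phi>1_def
    by (intro DERIV_cmult DERIV_sum DERIV_mult' has_field_derivative_scaled
        has_field_derivative_cnj_reflect_scaled) (use hol in \<open>auto simp: G1_def\<close>)
  have d2: "(\<Phi>1 has_field_derivative \<Phi>2 z) (at z)" for z
    unfolding \<Phi>1_def \<Phi>2_def
    by (intro DERIV_cmult DERIV_sum DERIV_cmult_right DERIV_mult' DERIV_add has_field_derivative_scaled
        has_field_derivative_cnj_reflect_scaled) (use hol hol1 in \<open>auto simp: G1_def G2_def\<close>)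
  have \<Phi>_real: "\<Phi> (of_real s) = of_real (C * (\<Sum>k\<in>K. (cmod (G k (c * of_real s)))\<^sup>2))" for s
    unfolding \<Phi>_def c'_def cnj_reflect_def by (simp add: mult_cnj_eq_cmod_sq)
  have S0: "S0 > 0" using S unfolding S0_def .
  have "Re (\<Phi> 0) > 0" using \<Phi>_real[of 0] C S by simp
  note D = has_second_deriv_0_ln_Re[OF d1 d2 this]
  have e0: "\<Phi> 0 = of_real (C * S0)" using \<Phi>_real[of 0] unfolding S0_def by simp
  have e1: "\<Phi>1 0 = of_real C * (c*A + cnj c * cnj A)"
    unfolding \<Phi>1_def A_def cnj_reflect_def G1_def c'_def
    by (simp add: sum_distrib_left sum.distrib algebra_simps)
  have e2: "\<Phi>2 0 = of_real C * (c*c*T + 2*c*cnj c*N + cnj c * cnj c * cnj T)"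
    unfolding \<Phi>2_def T_def N_def cnj_reflect_def G1_def G2_def c'_def
    by (simp add: sum_distrib_left sum.distrib algebra_simps)
  have "(Re (\<Phi>2 0) * Re (\<Phi> 0) - Re (\<Phi>1 0) * Re (\<Phi>1 0)) / (Re (\<Phi> 0) * Re (\<Phi> 0))
     = (Re (c*c*T + 2*c*cnj c*N + cnj c * cnj c * cnj T) * S0 - (Re (c*A + cnj c * cnj A))\<^sup>2)/(S0*S0)"
    unfolding e0 e1 e2 using C S0
    by (simp add: power2_eq_square divide_simps) (simp add: algebra_simps)
  then show ?thesis using D unfolding \<Phi>_real by simp
qed

lemma has_levi_0_ln_sum_sq:
  fixes G :: "'k \<Rightarrow> complex \<Rightarrow> complex" and C :: real
  assumes hol: "\<forall>k\<in>K. G k holomorphic_on UNIV"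
    and C: "C > 0" and S: "(\<Sum>k\<in>K. (cmod (G k 0))\<^sup>2) > 0"
  shows "has_levi_0 (\<lambda>z. ln (C * (\<Sum>k\<in>K. (cmod (G k z))\<^sup>2)))
     (cs_defect K (\<lambda>k. deriv (G k) 0) (\<lambda>k. G k 0) / (\<Sum>k\<in>K. (cmod (G k 0))\<^sup>2)\<^sup>2)"
proof -
  define S0 where "S0 = (\<Sum>k\<in>K. (cmod (G k 0))\<^sup>2)"
  define T where "T = (\<Sum>k\<in>K. deriv (deriv (G k)) 0 * cnj (G k 0))"
  define A where "A = (\<Sum>k\<in>K. deriv (G k) 0 * cnj (G k 0))"
  define N where "N = (\<Sum>k\<in>K. deriv (G k) 0 * cnj (deriv (G k) 0))"
  note D1 = has_second_deriv_0_ln_sum_sq[OF hol C S, of 1, folded S0_def T_def A_def N_def]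
  note D2 = has_second_deriv_0_ln_sum_sq[OF hol C S, of "\<i>", folded S0_def T_def A_def N_def]
  have S0: "S0 > 0" using S unfolding S0_def .
  have "Re N = (\<Sum>k\<in>K. (cmod (deriv (G k) 0))\<^sup>2)"
    unfolding N_def of_real_sum_cmod_sq[symmetric] by simp
  then have defect: "cs_defect K (\<lambda>k. deriv (G k) 0) (\<lambda>k. G k 0) = Re N * S0 - (cmod A)\<^sup>2"
    unfolding cs_defect_def S0_def A_def by simp
  have "(Re (1*1*T + 2*1*cnj 1*N + cnj 1 * cnj 1 * cnj T) * S0 - (Re (1*A + cnj 1 * cnj A))\<^sup>2)/(S0*S0)
      + (Re (\<i>*\<i>*T + 2*\<i>*cnj \<i>*N + cnj \<i> * cnj \<i> * cnj T) * S0 - (Re (\<i>*A + cnj \<i> * cnj A))\<^sup>2)/(S0*S0)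
      = 4 * ((Re N * S0 - (cmod A)\<^sup>2) / S0\<^sup>2)"
    using S0 unfolding cmod_power2 by (simp add: divide_simps power2_eq_square) (simp add: algebra_simps)
  then show ?thesis
    using D1 D2 unfolding has_levi_0_def defect S0_def by auto
qed

lemma index_mult_mat_sum:
  assumes "A \<in> carrier_mat nr m" "B \<in> carrier_mat m nc" "r < nr" "c < nc"
  shows "(A * B) $$ (r, c) = (\<Sum>s<m. A $$ (r, s) * B $$ (s, c))"
  using assms by (simp add: scalar_prod_def atLeast0LessThan)

lemma index_mult_mat_vec_sum:
  assumes "A \<in> carrier_mat nr m" "u \<in> carrier_vec m" "r < nr"
  shows "(A *\<^sub>v u) $ r = (\<Sum>s<m. A $$ (r, s) * u $ s)"
  using assms by (simp add: scalar_prod_def atLeast0LessThan)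

lemma sum_row_mult_mat_vec:
  assumes "A \<in> carrier_mat nr m" "u \<in> carrier_vec m"
  shows "(\<Sum>r<nr. w r * (A *\<^sub>v u) $ r) = (\<Sum>s<m. (\<Sum>r<nr. w r * A $$ (r, s)) * u $ s)"
proof -
  have "(\<Sum>r<nr. w r * (A *\<^sub>v u) $ r) = (\<Sum>r<nr. \<Sum>s<m. w r * (A $$ (r, s) * u $ s))"
    using index_mult_mat_vec_sum[OF assms] by (simp add: sum_distrib_left del: index_mult_mat_vec)
  also have "\<dots> = (\<Sum>s<m. (\<Sum>r<nr. w r * A $$ (r, s)) * u $ s)"
    unfolding sum_distrib_right mult.assoc by (rule sum.swap)
  finally show ?thesis .
qed

lemma sum_row_mult_mat:
  assumes "A \<in> carrier_mat nr m" "B \<in> carrier_mat m nc" "k < nc"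
  shows "(\<Sum>r<nr. w r * (A * B) $$ (r, k)) = (\<Sum>s<m. (\<Sum>r<nr. w r * A $$ (r, s)) * B $$ (s, k))"
proof -
  have "(\<Sum>r<nr. w r * (A * B) $$ (r, k)) = (\<Sum>r<nr. \<Sum>s<m. w r * (A $$ (r, s) * B $$ (s, k)))"
    using index_mult_mat_sum[OF assms(1,2) _ assms(3)] by (simp add: sum_distrib_left del: index_mult_mat)
  also have "\<dots> = (\<Sum>s<m. (\<Sum>r<nr. w r * A $$ (r, s)) * B $$ (s, k))"
    unfolding sum_distrib_right mult.assoc by (rule sum.swap)
  finally show ?thesis .
qed

lemma sum_mult_cnj_eq_0_imp_eq_0:
  fixes w :: "'m \<Rightarrow> complex"
  assumes "finite A" "(\<Sum>m\<in>A. w m * cnj (w m)) = 0"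
  shows "\<forall>m\<in>A. w m = 0"
proof -
  have "of_real (\<Sum>m\<in>A. (cmod (w m))\<^sup>2) = (0::complex)"
    unfolding of_real_sum_cmod_sq by (rule assms(2))
  then have "(\<Sum>m\<in>A. (cmod (w m))\<^sup>2) = 0" by (simp only: of_real_eq_0_iff)
  then show ?thesis using assms(1) by (simp add: sum_nonneg_eq_0_iff)
qed

lemma mat_eq_iff_entries:
  "A \<in> carrier_mat a b \<Longrightarrow> B \<in> carrier_mat a b \<Longrightarrow> A = B \<longleftrightarrow> (\<forall>i<a. \<forall>j<b. A $$ (i, j) = B $$ (i, j))"
  by (auto intro!: eq_matI)

lemma add_smult_zero_mat:
  "(A :: 'a :: comm_ring_1 mat) \<in> carrier_mat nr nc \<Longrightarrow> B \<in> carrier_mat nr nc \<Longrightarrow> A + 0 \<cdot>\<^sub>m B = A"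
  by (intro eq_matI) auto

lemma conj_add_smult_mat:
  fixes G X W K :: "'a :: comm_ring_1 mat"
  assumes "G \<in> carrier_mat a a" "X \<in> carrier_mat a b" "W \<in> carrier_mat a b" "K \<in> carrier_mat b b"
  shows "G * X * K + z \<cdot>\<^sub>m (G * W * K) = G * (X + z \<cdot>\<^sub>m W) * K"
  using assms by (simp add: mult_add_distrib_mat add_mult_distrib_mat[of _ a b] mult_smult_distrib
      mult_smult_assoc_mat[of _ a b])

lemma mult_add_smult_mat:
  fixes G E F :: "'a :: comm_ring_1 mat"
  assumes "G \<in> carrier_mat a a" "E \<in> carrier_mat a b" "F \<in> carrier_mat a b"
  shows "G * E + z \<cdot>\<^sub>m (G * F) = G * (E + z \<cdot>\<^sub>m F)"
  using assms by (simp add: mult_add_distrib_mat mult_smult_distrib)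

lemma mult_cancel_inner_mat:
  fixes G V K G' B :: "'a :: comm_ring_1 mat"
  assumes "G \<in> carrier_mat a a" "V \<in> carrier_mat a b" "K \<in> carrier_mat b b" "G' \<in> carrier_mat b b"
    "B \<in> carrier_mat b c" "K * G' = 1\<^sub>m b"
  shows "(G * V * K) * (G' * B) = G * (V * B)"
proof -
  have "(G * V * K) * (G' * B) = (G * V) * (K * (G' * B))"
    using assms by (intro assoc_mult_mat[of _ a b _ b _ c]) auto
  also have "K * (G' * B) = (K * G') * B"
    using assms by (intro assoc_mult_mat[of _ b b _ b _ c, symmetric]) auto
  also have "\<dots> = B" using assms by simp
  also have "(G * V) * B = G * (V * B)"
    using assms by (intro assoc_mult_mat[of _ a a _ b _ c]) auto
  finally show ?thesis .
qed

lemma diff_eq_0_mat_iff: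
  fixes A B :: "'a :: ab_group_add mat"
  assumes A: "A \<in> carrier_mat a b" and B: "B \<in> carrier_mat a b"
  shows "A - B = 0\<^sub>m a b \<longleftrightarrow> A = B"
proof
  assume H: "A - B = 0\<^sub>m a b"
  show "A = B"
  proof (rule eq_matI)
    fix i j assume "i < dim_row B" "j < dim_col B"
    moreover from this have "(A - B) $$ (i, j) = 0" using H B by simp
    ultimately show "A $$ (i, j) = B $$ (i, j)" using A B by simp
  qed (use A B in auto)
next
  assume "A = B"
  then show "A - B = 0\<^sub>m a b" using B by (intro eq_matI) auto
qed

lemma add_eq_iff_diff_eq_0_mat:
  fixes P Q R :: "'a :: ab_group_add mat"
  assumes P: "P \<in> carrier_mat a b" and Q: "Q \<in> carrier_mat a b" and R: "R \<in> carrier_mat a b"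
  shows "P + Q = R \<longleftrightarrow> Q - (R - P) = 0\<^sub>m a b"
proof
  assume "P + Q = R"
  then show "Q - (R - P) = 0\<^sub>m a b" using P Q by (intro eq_matI) auto
next
  assume H: "Q - (R - P) = 0\<^sub>m a b"
  show "P + Q = R"
  proof (rule eq_matI)
    fix i j assume "i < dim_row R" "j < dim_col R"
    moreover from this have "(Q - (R - P)) $$ (i, j) = 0" using H R by simp
    ultimately show "(P + Q) $$ (i, j) = R $$ (i, j)" using P Q R by simp
  qed (use P Q R in auto)
qed

lemma ex_carrier_mat_iff_ex_entries:
  "(\<exists>A\<in>carrier_mat n n. P A) \<longleftrightarrow> (\<exists>\<xi>. P (mat n n (\<lambda>(r, l). \<xi> r l)))"
proof
  assume "\<exists>A\<in>carrier_mat n n. P A"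
  then obtain A where "A \<in> carrier_mat n n" "P A" by blast
  moreover from this(1) have "mat n n (\<lambda>(r, l). A $$ (r, l)) = A" by (intro eq_matI) auto
  ultimately show "\<exists>\<xi>. P (mat n n (\<lambda>(r, l). \<xi> r l))" by (intro exI[of _ "\<lambda>r l. A $$ (r, l)"]) simp
qed auto

text \<open>The product rule for \<open>(X + z W) B(z)\<close> with \<open>B'(0) = K B(0)\<close> versus the derivative
  \<open>A X B(0)\<close> expected from a Lie algebra element acting by \<open>K\<close> and \<open>A\<close> at the two ends
  of an arrow.\<close>

lemma snoc_deriv_identity_iff:
  fixes X W A K B :: "'a :: comm_ring_1 mat"
  assumes X: "X \<in> carrier_mat p q" and W: "W \<in> carrier_mat p q" and A: "A \<in> carrier_mat p p"
    and K: "K \<in> carrier_mat q q" and B: "B \<in> carrier_mat q c"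
  shows "X * (K * B) + W * B = A * (X * B) \<longleftrightarrow> (W - (A * X - X * K)) * B = 0\<^sub>m p c"
proof -
  have T: "A * X - X * K \<in> carrier_mat p q" using X A K by auto
  have "(W - (A * X - X * K)) * B = W * B - (A * X - X * K) * B"
    by (rule minus_mult_distrib_mat[OF W T B])
  also have "(A * X - X * K) * B = A * X * B - X * K * B"
    using X A K B by (intro minus_mult_distrib_mat[of _ p q]) auto
  also have "\<dots> = A * (X * B) - X * (K * B)"
    using X A K B by (simp add: assoc_mult_mat[of _ p p _ q _ c] assoc_mult_mat[of _ p q _ q _ c])
  finally have "(W - (A * X - X * K)) * B = W * B - (A * (X * B) - X * (K * B))" .
  moreover have "X * (K * B) + W * B = A * (X * B) \<longleftrightarrow> W * B - (A * (X * B) - X * (K * B)) = 0\<^sub>m p c"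
    using X W A K B by (intro add_eq_iff_diff_eq_0_mat) auto
  ultimately show ?thesis by simp
qed

section \<open>Leibniz determinants: Cauchy--Binet and directional derivatives\<close>

definition det_fun :: "nat \<Rightarrow> (nat \<Rightarrow> nat \<Rightarrow> complex) \<Rightarrow> complex" where
  "det_fun n M = (\<Sum>p\<in>{p. p permutes {0..<n}}. of_int (sign p) * (\<Prod>i\<in>{0..<n}. M i (p i)))"

definition minor :: "nat \<Rightarrow> (nat \<Rightarrow> 'm \<Rightarrow> complex) \<Rightarrow> (nat \<Rightarrow> 'm) \<Rightarrow> complex" where
  "minor n a g = det_fun n (\<lambda>r s. a r (g s))"

definition det_fun_dir :: "nat \<Rightarrow> (nat \<Rightarrow> nat \<Rightarrow> complex) \<Rightarrow> (nat \<Rightarrow> nat \<Rightarrow> complex) \<Rightarrow> complex" where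
  "det_fun_dir n M0 M1 = (\<Sum>r<n. det_fun n (\<lambda>i j. if i = r then M1 i j else M0 i j))"

lemma det_mat_eq_det_fun: "det (mat n n (\<lambda>(r,c). M r c)) = det_fun n M"
  unfolding det_fun_def
  by (subst det_def'[of _ n]) (auto intro!: sum.cong prod.cong simp: permutes_in_image)

lemma det_fun_cong:
  assumes "\<forall>i<n. \<forall>j<n. M i j = M' i j"
  shows "det_fun n M = det_fun n M'"
  unfolding det_fun_def
  by (rule sum.cong[OF refl]) (use assms in \<open>auto intro!: prod.cong simp: permutes_in_image\<close>)

lemma bij_betw_PiE_compose_inv_permutes:
  assumes pi: "\<pi> permutes {0..<n}"
  shows "bij_betw (\<lambda>g. g \<circ> Hilbert_Choice.inv \<pi>) (PiE {0..<n} (\<lambda>_. M)) (PiE {0..<n} (\<lambda>_. M))"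
proof (rule bij_betw_byWitness[where f' = "\<lambda>g. g \<circ> \<pi>"])
  have ipi: "Hilbert_Choice.inv \<pi> permutes {0..<n}" by (rule permutes_inv[OF pi])
  show "\<forall>g\<in>PiE {0..<n} (\<lambda>_. M). g \<circ> Hilbert_Choice.inv \<pi> \<circ> \<pi> = g"
    and "\<forall>g\<in>PiE {0..<n} (\<lambda>_. M). g \<circ> \<pi> \<circ> Hilbert_Choice.inv \<pi> = g"
    by (auto simp: fun_eq_iff permutes_inverses[OF pi])
  show "(\<lambda>g. g \<circ> Hilbert_Choice.inv \<pi>) ` PiE {0..<n} (\<lambda>_. M) \<subseteq> PiE {0..<n} (\<lambda>_. M)"
    using permutes_in_image[OF ipi] permutes_not_in[OF ipi]
    by (auto simp: PiE_def extensional_def Pi_def)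
  show "(\<lambda>g. g \<circ> \<pi>) ` PiE {0..<n} (\<lambda>_. M) \<subseteq> PiE {0..<n} (\<lambda>_. M)"
    using permutes_in_image[OF pi] permutes_not_in[OF pi]
    by (auto simp: PiE_def extensional_def Pi_def)
qed

lemma sum_permutes_minor_product_shift:
  fixes a :: "nat \<Rightarrow> 'm \<Rightarrow> complex"
  assumes pi: "\<pi> permutes {0..<n}"
  shows "(\<Sum>\<sigma>\<in>{p. p permutes {0..<n}}. of_int (sign \<pi>) * of_int (sign \<sigma>) *
            ((\<Prod>r\<in>{0..<n}. a r ((g \<circ> Hilbert_Choice.inv \<pi>) (\<pi> r))) * (\<Prod>r\<in>{0..<n}. cnj (a r ((g \<circ> Hilbert_Choice.inv \<pi>) (\<sigma> r))))))
       = (\<Sum>p\<in>{p. p permutes {0..<n}}. of_int (sign p) * (\<Prod>r\<in>{0..<n}. a r (g r) * cnj (a (p r) (g r))))"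
proof -
  let ?P = "{p. p permutes {0..<n}}"
  have "(\<Sum>\<sigma>\<in>?P. of_int (sign \<pi>) * of_int (sign \<sigma>) *
            ((\<Prod>r\<in>{0..<n}. a r ((g \<circ> Hilbert_Choice.inv \<pi>) (\<pi> r))) * (\<Prod>r\<in>{0..<n}. cnj (a r ((g \<circ> Hilbert_Choice.inv \<pi>) (\<sigma> r))))))
     = (\<Sum>q\<in>?P. of_int (sign \<pi>) * of_int (sign (\<pi> \<circ> q)) *
            ((\<Prod>r\<in>{0..<n}. a r ((g \<circ> Hilbert_Choice.inv \<pi>) (\<pi> r))) * (\<Prod>r\<in>{0..<n}. cnj (a r ((g \<circ> Hilbert_Choice.inv \<pi>) ((\<pi> \<circ> q) r))))))"
    by (rule setum_permutations_compose_left[OF pi])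
  also have "\<dots> = (\<Sum>q\<in>?P. of_int (sign q) *
            ((\<Prod>r\<in>{0..<n}. a r (g r)) * (\<Prod>r\<in>{0..<n}. cnj (a r (g (q r))))))"
  proof (rule sum.cong[OF refl])
    fix q assume "q \<in> ?P"
    then have q: "q permutes {0..<n}" by simp
    have s: "sign (\<pi> \<circ> q) = sign \<pi> * sign q"
      by (rule sign_compose) (use pi q permutation_permutes in blast)+
    have "(of_int (sign \<pi>) * of_int (sign (\<pi> \<circ> q)) :: complex) = of_int (sign q)"
      unfolding s by (simp flip: of_int_mult add: mult.assoc[symmetric])
    then show "of_int (sign \<pi>) * of_int (sign (\<pi> \<circ> q)) *
            ((\<Prod>r\<in>{0..<n}. a r ((g \<circ> Hilbert_Choice.inv \<pi>) (\<pi> r))) * (\<Prod>r\<in>{0..<n}. cnj (a r ((g \<circ> Hilbert_Choice.inv \<pi>) ((\<pi> \<circ> q) r)))))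
       = of_int (sign q) * ((\<Prod>r\<in>{0..<n}. a r (g r)) * (\<Prod>r\<in>{0..<n}. cnj (a r (g (q r)))))"
      by (simp add: permutes_inverses[OF pi])
  qed
  also have "\<dots> = (\<Sum>p\<in>?P. of_int (sign (Hilbert_Choice.inv p)) *
            ((\<Prod>r\<in>{0..<n}. a r (g r)) * (\<Prod>r\<in>{0..<n}. cnj (a r (g (Hilbert_Choice.inv p r))))))"
    by (rule sum_permutations_inverse)
  also have "\<dots> = (\<Sum>p\<in>?P. of_int (sign p) * (\<Prod>r\<in>{0..<n}. a r (g r) * cnj (a (p r) (g r))))"
  proof (rule sum.cong[OF refl])
    fix p assume "p \<in> ?P"
    then have p: "p permutes {0..<n}" by simp
    have s: "sign (Hilbert_Choice.inv p) = sign p"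
      by (rule sign_inverse) (use p permutation_permutes in blast)
    have "(\<Prod>r\<in>{0..<n}. cnj (a r (g (Hilbert_Choice.inv p r)))) = (\<Prod>r\<in>{0..<n}. cnj (a (p r) (g r)))"
      by (subst prod.permute[OF p]) (simp add: o_def permutes_inverses[OF p])
    then show "of_int (sign (Hilbert_Choice.inv p)) * ((\<Prod>r\<in>{0..<n}. a r (g r)) * (\<Prod>r\<in>{0..<n}. cnj (a r (g (Hilbert_Choice.inv p r)))))
      = of_int (sign p) * (\<Prod>r\<in>{0..<n}. a r (g r) * cnj (a (p r) (g r)))"
      unfolding s by (simp add: prod.distrib)
  qed
  finally show ?thesis .
qed

text \<open>Summing over all maps \<open>g\<close> rather than over increasing ones counts every
  \<open>n\<close>-element set of columns \<open>n!\<close> times, whence the factor \<open>n!\<close>.\<close>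

lemma cauchy_binet_gram:
  fixes a :: "nat \<Rightarrow> 'm \<Rightarrow> complex"
  assumes M: "finite M"
  shows "of_nat (fact n) * det_fun n (\<lambda>r c. \<Sum>m\<in>M. a r m * cnj (a c m))
     = (\<Sum>g\<in>PiE {0..<n} (\<lambda>_. M). minor n a g * cnj (minor n a g))"
proof -
  let ?P = "{p. p permutes {0..<n}}"
  let ?F = "PiE {0..<n} (\<lambda>_. M)"
  define X where "X = (\<Sum>g\<in>?F. \<Sum>p\<in>?P. of_int (sign p) * (\<Prod>r\<in>{0..<n}. a r (g r) * cnj (a (p r) (g r))))"
  have "det_fun n (\<lambda>r c. \<Sum>m\<in>M. a r m * cnj (a c m))
      = (\<Sum>p\<in>?P. \<Sum>g\<in>?F. of_int (sign p) * (\<Prod>r\<in>{0..<n}. a r (g r) * cnj (a (p r) (g r))))"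
    unfolding det_fun_def
    by (rule sum.cong[OF refl]) (simp add: prod_sum_PiE[OF _ M] sum_distrib_left)
  also have "\<dots> = X" unfolding X_def by (rule sum.swap)
  finally have L: "det_fun n (\<lambda>r c. \<Sum>m\<in>M. a r m * cnj (a c m)) = X" .
  have R1: "minor n a g * cnj (minor n a g) = (\<Sum>\<pi>\<in>?P. \<Sum>\<sigma>\<in>?P. of_int (sign \<pi>) * of_int (sign \<sigma>) *
            ((\<Prod>r\<in>{0..<n}. a r (g (\<pi> r))) * (\<Prod>r\<in>{0..<n}. cnj (a r (g (\<sigma> r))))))" for g
    unfolding minor_def det_fun_def
    by (simp add: sum_product cnj_sum cnj_prod algebra_simps)
  have "(\<Sum>g\<in>?F. minor n a g * cnj (minor n a g)) = (\<Sum>\<pi>\<in>?P. \<Sum>g\<in>?F. \<Sum>\<sigma>\<in>?P. of_int (sign \<pi>) * of_int (sign \<sigma>) *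
            ((\<Prod>r\<in>{0..<n}. a r (g (\<pi> r))) * (\<Prod>r\<in>{0..<n}. cnj (a r (g (\<sigma> r))))))"
    unfolding R1 by (rule sum.swap)
  also have "\<dots> = (\<Sum>\<pi>\<in>?P. X)"
  proof (rule sum.cong[OF refl])
    fix \<pi> assume "\<pi> \<in> ?P"
    then have pi: "\<pi> permutes {0..<n}" by simp
    have "(\<Sum>g\<in>?F. \<Sum>\<sigma>\<in>?P. of_int (sign \<pi>) * of_int (sign \<sigma>) *
            ((\<Prod>r\<in>{0..<n}. a r (g (\<pi> r))) * (\<Prod>r\<in>{0..<n}. cnj (a r (g (\<sigma> r))))))
       = (\<Sum>g\<in>?F. \<Sum>\<sigma>\<in>?P. of_int (sign \<pi>) * of_int (sign \<sigma>) *
            ((\<Prod>r\<in>{0..<n}. a r ((g \<circ> Hilbert_Choice.inv \<pi>) (\<pi> r))) * (\<Prod>r\<in>{0..<n}. cnj (a r ((g \<circ> Hilbert_Choice.inv \<pi>) (\<sigma> r))))))"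
      by (rule sum.reindex_bij_betw[OF bij_betw_PiE_compose_inv_permutes[OF pi], symmetric])
    also have "\<dots> = X"
      unfolding X_def by (rule sum.cong[OF refl]) (rule sum_permutes_minor_product_shift[OF pi])
    finally show "(\<Sum>g\<in>?F. \<Sum>\<sigma>\<in>?P. of_int (sign \<pi>) * of_int (sign \<sigma>) *
            ((\<Prod>r\<in>{0..<n}. a r (g (\<pi> r))) * (\<Prod>r\<in>{0..<n}. cnj (a r (g (\<sigma> r)))))) = X" .
  qed
  also have "\<dots> = of_nat (fact n) * X"
    by (simp add: card_permutations)
  finally show ?thesis unfolding L by simp
qed

lemma prod_if_eq:
  assumes "r < (n::nat)"
  shows "(\<Prod>i\<in>{0..<n}. (if i = r then x i else y i)) = x r * (\<Prod>i\<in>{0..<n}-{r}. y i)"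
proof -
  have "(\<Prod>i\<in>{0..<n}. (if i = r then x i else y i))
      = (if r = r then x r else y r) * (\<Prod>i\<in>{0..<n}-{r}. (if i = r then x i else y i))"
    using assms by (intro prod.remove) auto
  also have "(\<Prod>i\<in>{0..<n}-{r}. (if i = r then x i else y i)) = (\<Prod>i\<in>{0..<n}-{r}. y i)"
    by (rule prod.cong) auto
  finally show ?thesis by simp
qed

lemma det_fun_row_sum:
  assumes r: "r < n" and L: "finite L"
  shows "det_fun n (\<lambda>i j. if i = r then (\<Sum>l\<in>L. c l * v l j) else M i j)
       = (\<Sum>l\<in>L. c l * det_fun n (\<lambda>i j. if i = r then v l j else M i j))"
proof -
  have "det_fun n (\<lambda>i j. if i = r then (\<Sum>l\<in>L. c l * v l j) else M i j)
      = (\<Sum>p\<in>{p. p permutes {0..<n}}. \<Sum>l\<in>L. c l * (of_int (sign p) * (v l (p r) * (\<Prod>i\<in>{0..<n}-{r}. M i (p i)))))"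
    unfolding det_fun_def
    by (rule sum.cong[OF refl], subst prod_if_eq[OF r])
      (simp add: sum_distrib_left sum_distrib_right algebra_simps)
  also have "\<dots> = (\<Sum>l\<in>L. c l * det_fun n (\<lambda>i j. if i = r then v l j else M i j))"
    unfolding det_fun_def
    by (subst sum.swap) (simp add: prod_if_eq[OF r] sum_distrib_left)
  finally show ?thesis .
qed

lemma det_fun_row_add:
  assumes r: "r < n"
  shows "det_fun n (\<lambda>i j. if i = r then u i j + w i j else M i j)
       = det_fun n (\<lambda>i j. if i = r then u i j else M i j) + det_fun n (\<lambda>i j. if i = r then w i j else M i j)"
  unfolding det_fun_def
  by (simp add: prod_if_eq[OF r] sum.distrib[symmetric] algebra_simps)

lemma det_fun_row_zero:
  assumes r: "r < n"
  shows "det_fun n (\<lambda>i j. if i = r then 0 else M i j) = 0"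
  unfolding det_fun_def by (simp add: prod_if_eq[OF r])

lemma det_fun_identical_rows:
  assumes r: "r < n" and l: "l < n" and rl: "l \<noteq> r"
  shows "det_fun n (\<lambda>i j. if i = r then M l j else M i j) = 0"
proof -
  have "det (mat n n (\<lambda>(i,j). if i = r then M l j else M i j)) = 0"
    by (rule det_identical_rows[of _ n r l]) (use r l rl in \<open>auto intro!: eq_vecI\<close>)
  then show ?thesis by (simp add: det_mat_eq_det_fun)
qed

lemma det_fun_row_comb:
  assumes r: "r < n"
  shows "det_fun n (\<lambda>i j. if i = r then (\<Sum>l<n. c l * M l j) else M i j) = c r * det_fun n M"
proof -
  have "det_fun n (\<lambda>i j. if i = r then (\<Sum>l<n. c l * M l j) else M i j)
     = (\<Sum>l<n. c l * det_fun n (\<lambda>i j. if i = r then M l j else M i j))"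
    by (rule det_fun_row_sum[OF r]) simp
  also have "\<dots> = (\<Sum>l<n. if l = r then c r * det_fun n M else 0)"
  proof (rule sum.cong[OF refl])
    fix l assume "l \<in> {..<n}"
    moreover have "(\<lambda>i j. if i = r then M r j else M i j) = M" by (intro ext) auto
    ultimately show "c l * det_fun n (\<lambda>i j. if i = r then M l j else M i j)
        = (if l = r then c r * det_fun n M else 0)"
      using det_fun_identical_rows[OF r, of l M] by auto
  qed
  also have "\<dots> = c r * det_fun n M" using r by simp
  finally show ?thesis .
qed

lemma det_fun_dir_cong:
  assumes "\<forall>i<n. \<forall>j<n. M0 i j = M0' i j" "\<forall>i<n. \<forall>j<n. M1 i j = M1' i j"
  shows "det_fun_dir n M0 M1 = det_fun_dir n M0' M1'"
  unfolding det_fun_dir_def by (rule sum.cong[OF refl], rule det_fun_cong) (use assms in auto)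

lemma det_fun_dir_row_comb:
  assumes "\<forall>r<n. \<forall>j<n. M1 r j = (\<Sum>l<n. \<xi> r l * M0 l j)"
  shows "det_fun_dir n M0 M1 = (\<Sum>r<n. \<xi> r r) * det_fun n M0"
proof -
  have "det_fun_dir n M0 M1 = (\<Sum>r<n. det_fun n (\<lambda>i j. if i = r then (\<Sum>l<n. \<xi> r l * M0 l j) else M0 i j))"
    unfolding det_fun_dir_def
    by (rule sum.cong[OF refl], rule det_fun_cong) (use assms in auto)
  also have "\<dots> = (\<Sum>r<n. \<xi> r r * det_fun n M0)"
    by (rule sum.cong[OF refl]) (rule det_fun_row_comb, simp)
  finally show ?thesis by (simp add: sum_distrib_right)
qed

lemma det_fun_dir_add:
  "det_fun_dir n M0 (\<lambda>i j. M1 i j + M2 i j) = det_fun_dir n M0 M1 + det_fun_dir n M0 M2"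
  unfolding det_fun_dir_def sum.distrib[symmetric]
  by (rule sum.cong[OF refl]) (simp add: det_fun_row_add)

lemma det_fun_dir_zero:
  assumes "\<forall>i<n. \<forall>j<n. M1 i j = 0"
  shows "det_fun_dir n M0 M1 = 0"
proof -
  have "det_fun_dir n M0 M1 = (\<Sum>r<n. det_fun n (\<lambda>i j. if i = r then 0 else M0 i j))"
    unfolding det_fun_dir_def by (rule sum.cong[OF refl], rule det_fun_cong) (use assms in auto)
  also have "\<dots> = 0" by (simp add: det_fun_row_zero)
  finally show ?thesis .
qed

lemma det_fun_dir_single_col:
  assumes r0: "r0 < n"
  shows "det_fun_dir n M (\<lambda>i j. if j = r0 then c i else 0) = det_fun n (\<lambda>i j. if j = r0 then c i else M i j)"
proof -
  let ?P = "{p. p permutes {0..<n}}"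
  let ?t = "\<lambda>p r. \<Prod>i\<in>{0..<n}. (if i = r then (if p i = r0 then c i else 0) else M i (p i))"
  have "det_fun_dir n M (\<lambda>i j. if j = r0 then c i else 0) = (\<Sum>r<n. \<Sum>p\<in>?P. of_int (sign p) * ?t p r)"
    unfolding det_fun_dir_def det_fun_def by (intro sum.cong refl prod.cong)
  also have "\<dots> = (\<Sum>p\<in>?P. of_int (sign p) * (\<Sum>r<n. ?t p r))"
    by (subst sum.swap) (simp add: sum_distrib_left)
  also have "\<dots> = (\<Sum>p\<in>?P. of_int (sign p) * (\<Prod>i\<in>{0..<n}. (if p i = r0 then c i else M i (p i))))"
  proof (rule sum.cong[OF refl])
    fix p assume "p \<in> ?P"
    then have p: "p permutes {0..<n}" by simp
    define rs where "rs = Hilbert_Choice.inv p r0"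
    have rs: "rs < n" "p rs = r0" unfolding rs_def
      using permutes_inv[OF p] r0 permutes_in_image permutes_inverses[OF p] by auto
    have iff: "p i = r0 \<longleftrightarrow> i = rs" for i
      using rs(2) permutes_inj[OF p] by (auto simp: inj_def)
    have zero: "?t p r = 0" if "r \<in> {..<n} - {rs}" for r
      using that iff by (intro prod_zero bexI[of _ r]) auto
    have "(\<Sum>r<n. ?t p r) = ?t p rs + (\<Sum>r\<in>{..<n} - {rs}. ?t p r)"
      using rs(1) by (intro sum.remove) auto
    also have "(\<Sum>r\<in>{..<n} - {rs}. ?t p r) = 0"
      by (rule sum.neutral) (use zero in blast)
    also have "?t p rs = (\<Prod>i\<in>{0..<n}. (if p i = r0 then c i else M i (p i)))"
      by (rule prod.cong) (auto simp: iff)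
    finally show "of_int (sign p) * (\<Sum>r<n. ?t p r)
      = of_int (sign p) * (\<Prod>i\<in>{0..<n}. (if p i = r0 then c i else M i (p i)))" by simp
  qed
  also have "\<dots> = det_fun n (\<lambda>i j. if j = r0 then c i else M i j)" unfolding det_fun_def ..
  finally show ?thesis .
qed

lemma has_field_derivative_det_fun:
  assumes "\<forall>r<n. \<forall>c<n. ((\<lambda>z. M z r c) has_field_derivative M1 r c) (at z0)"
  shows "((\<lambda>z. det_fun n (M z)) has_field_derivative det_fun_dir n (M z0) M1) (at z0)"
proof -
  let ?P = "{p. p permutes {0..<n}}"
  have "((\<lambda>z. det_fun n (M z)) has_field_derivative
      (\<Sum>p\<in>?P. of_int (sign p) * (\<Sum>r\<in>{0..<n}. M1 r (p r) * (\<Prod>i\<in>{0..<n}-{r}. M z0 i (p i))))) (at z0)"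
    unfolding det_fun_def
  proof (intro DERIV_sum DERIV_cmult has_field_derivative_prod)
    fix p r assume "p \<in> ?P" "r \<in> {0..<n}"
    then show "((\<lambda>z. M z r (p r)) has_field_derivative M1 r (p r)) (at z0)"
      using assms permutes_in_image[of p "{0..<n}" r] by auto
  qed
  also have "(\<Sum>p\<in>?P. of_int (sign p) * (\<Sum>r\<in>{0..<n}. M1 r (p r) * (\<Prod>i\<in>{0..<n}-{r}. M z0 i (p i))))
     = det_fun_dir n (M z0) M1"
    unfolding det_fun_dir_def det_fun_def
    by (subst sum.swap) (auto simp: prod_if_eq sum_distrib_left lessThan_atLeast0 intro!: sum.cong)
  finally show ?thesis .
qed

lemma holomorphic_on_det_fun:
  assumes "\<forall>r<n. \<forall>c<n. (\<lambda>z. M z r c) holomorphic_on UNIV"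
  shows "(\<lambda>z. det_fun n (M z)) holomorphic_on UNIV"
  unfolding det_fun_def
proof (intro holomorphic_on_sum holomorphic_on_mult holomorphic_on_const holomorphic_on_prod)
  fix p r assume "p \<in> {p. p permutes {0..<n}}" "r \<in> {0..<n}"
  then show "(\<lambda>z. M z r (p r)) holomorphic_on UNIV"
    using assms permutes_in_image[of p "{0..<n}" r] by auto
qed

lemma row_combination_on_nonzero_minor:
  assumes f0: "minor n a0 f0 \<noteq> 0"
  obtains \<xi> where "\<forall>r<n. \<forall>s<n. a1 r (f0 s) = (\<Sum>l<n. \<xi> r l * a0 l (f0 s))"
proof -
  define A where "A = mat n n (\<lambda>(r,s). a0 r (f0 s))"
  define A1 where "A1 = mat n n (\<lambda>(r,s). a1 r (f0 s))"
  have A: "A \<in> carrier_mat n n" and A1: "A1 \<in> carrier_mat n n" unfolding A_def A1_def by auto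
  have "det A \<noteq> 0" using f0 unfolding A_def minor_def det_mat_eq_det_fun .
  then obtain B where B: "B \<in> carrier_mat n n" and BA: "B * A = 1\<^sub>m n"
    using det_non_zero_imp_unit[OF A, of "()"] unfolding Units_def ring_mat_def by auto
  have XA: "(A1 * B) * A = A1"
    using assoc_mult_mat[OF A1 B A] BA A1 by simp
  have "\<forall>r<n. \<forall>s<n. a1 r (f0 s) = (\<Sum>l<n. (A1 * B) $$ (r, l) * a0 l (f0 s))"
  proof (intro allI impI)
    fix r s assume rs: "r < n" "s < n"
    have "a1 r (f0 s) = A1 $$ (r, s)" unfolding A1_def using rs by simp
    also have "\<dots> = ((A1 * B) * A) $$ (r, s)" unfolding XA ..
    also have "\<dots> = (\<Sum>l<n. (A1 * B) $$ (r, l) * a0 l (f0 s))"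
      using rs A B A1 by (simp add: scalar_prod_def A_def atLeast0LessThan)
    finally show "a1 r (f0 s) = (\<Sum>l<n. (A1 * B) $$ (r, l) * a0 l (f0 s))" .
  qed
  then show thesis by (rule that)
qed

text \<open>By Cramer's rule, replacing column \<open>r0\<close> of the invertible matrix \<open>a0 \<circ> f0\<close> by the
  column \<open>(\<epsilon> i m)\<^sub>i\<close> multiplies its determinant by the \<open>r0\<close>-th coordinate of that column in
  the basis of columns of \<open>a0 \<circ> f0\<close>.\<close>

lemma det_fun_dir_replace_col_vanishing:
  assumes f0: "minor n a0 f0 \<noteq> 0" and \<epsilon>0: "\<forall>r<n. \<forall>s<n. \<epsilon> r (f0 s) = 0"
    and D: "\<forall>r0<n. det_fun_dir n (\<lambda>r s. a0 r ((f0(r0 := m)) s)) (\<lambda>r s. \<epsilon> r ((f0(r0 := m)) s)) = 0"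
    and i: "i < n"
  shows "\<epsilon> i m = 0"
proof -
  define A where "A = mat n n (\<lambda>(r,s). a0 r (f0 s))"
  have A: "A \<in> carrier_mat n n" unfolding A_def by simp
  have dA: "det A \<noteq> 0" using f0 unfolding A_def minor_def det_mat_eq_det_fun .
  then obtain B where B: "B \<in> carrier_mat n n" and AB: "A * B = 1\<^sub>m n"
    using det_non_zero_imp_unit[OF A, of "()"] unfolding Units_def ring_mat_def by auto
  define c where "c = vec n (\<lambda>i. \<epsilon> i m)"
  define x where "x = B *\<^sub>v c"
  have c: "c \<in> carrier_vec n" and x: "x \<in> carrier_vec n" unfolding c_def x_def using B by auto
  have Ax: "A *\<^sub>v x = c" unfolding x_def using A B c
    by (simp add: assoc_mult_mat_vec[symmetric] AB)
  have "x $ r0 = 0" if r0: "r0 < n" for r0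
  proof -
    let ?f = "f0(r0 := m)"
    have "0 = det_fun_dir n (\<lambda>r s. a0 r (?f s)) (\<lambda>r s. \<epsilon> r (?f s))" using D r0 by simp
    also have "\<dots> = det_fun_dir n (\<lambda>r s. a0 r (?f s)) (\<lambda>i j. if j = r0 then \<epsilon> i m else 0)"
      by (rule det_fun_dir_cong) (auto simp: \<epsilon>0)
    also have "\<dots> = det_fun n (\<lambda>i j. if j = r0 then \<epsilon> i m else a0 i (?f j))"
      by (rule det_fun_dir_single_col[OF r0])
    also have "\<dots> = det (replace_col A c r0)"
      unfolding replace_col_def A_def c_def det_mat_eq_det_fun[symmetric]
      by (intro arg_cong[of _ _ det] eq_matI) auto
    also have "\<dots> = x $ r0 * det A"
      unfolding Ax[symmetric] by (rule cramer_lemma_mat[OF A x r0])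
    finally show ?thesis using dA by simp
  qed
  then have "x = 0\<^sub>v n" using x by (intro eq_vecI) auto
  then have "c = A *\<^sub>v 0\<^sub>v n" using Ax by simp
  also have "\<dots> = 0\<^sub>v n" using A by (auto intro!: eq_vecI simp: scalar_prod_def)
  finally have "c = 0\<^sub>v n" .
  then have "c $ i = 0" using i by simp
  then show ?thesis using i unfolding c_def by simp
qed

text \<open>\<open>\<xi>\<close> is read off from the invertible minor at \<open>f0\<close>; the remainder \<open>\<epsilon> = a1 - \<xi> a0\<close>
  then has vanishing directional derivative at every minor, and moving one column of \<open>f0\<close>
  at a time shows \<open>\<epsilon> = 0\<close>.\<close>

lemma rows_combination_if_det_fun_dir_proportional:
  fixes a0 a1 :: "nat \<Rightarrow> 'm \<Rightarrow> complex"
  assumes f0: "f0 \<in> PiE {0..<n} (\<lambda>_. M)" "minor n a0 f0 \<noteq> 0"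
    and H: "\<forall>f\<in>PiE {0..<n} (\<lambda>_. M).
      det_fun_dir n (\<lambda>r s. a0 r (f s)) (\<lambda>r s. a1 r (f s)) = lam * minor n a0 f"
  shows "\<exists>\<xi>. \<forall>r<n. \<forall>m\<in>M. a1 r m = (\<Sum>l<n. \<xi> r l * a0 l m)"
proof -
  obtain \<xi> where \<xi>: "\<forall>r<n. \<forall>s<n. a1 r (f0 s) = (\<Sum>l<n. \<xi> r l * a0 l (f0 s))"
    using row_combination_on_nonzero_minor[OF f0(2)] by blast
  define \<epsilon> where "\<epsilon> r m = a1 r m - (\<Sum>l<n. \<xi> r l * a0 l m)" for r m
  have \<epsilon>0: "\<forall>r<n. \<forall>s<n. \<epsilon> r (f0 s) = 0" using \<xi> unfolding \<epsilon>_def by simp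
  have D\<epsilon>: "det_fun_dir n (\<lambda>r s. a0 r (f s)) (\<lambda>r s. \<epsilon> r (f s)) = (lam - (\<Sum>r<n. \<xi> r r)) * minor n a0 f"
    if f: "f \<in> PiE {0..<n} (\<lambda>_. M)" for f
  proof -
    have "lam * minor n a0 f = det_fun_dir n (\<lambda>r s. a0 r (f s)) (\<lambda>r s. a1 r (f s))"
      using H f by simp
    also have "(\<lambda>r s. a1 r (f s)) = (\<lambda>r s. \<epsilon> r (f s) + (\<Sum>l<n. \<xi> r l * a0 l (f s)))"
      unfolding \<epsilon>_def by auto
    also have "det_fun_dir n (\<lambda>r s. a0 r (f s)) \<dots> = det_fun_dir n (\<lambda>r s. a0 r (f s)) (\<lambda>r s. \<epsilon> r (f s))
        + det_fun_dir n (\<lambda>r s. a0 r (f s)) (\<lambda>r s. (\<Sum>l<n. \<xi> r l * a0 l (f s)))"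
      by (rule det_fun_dir_add)
    also have "det_fun_dir n (\<lambda>r s. a0 r (f s)) (\<lambda>r s. (\<Sum>l<n. \<xi> r l * a0 l (f s)))
        = (\<Sum>r<n. \<xi> r r) * minor n a0 f"
      unfolding minor_def by (rule det_fun_dir_row_comb) auto
    finally show ?thesis by (simp add: algebra_simps)
  qed
  have "det_fun_dir n (\<lambda>r s. a0 r (f0 s)) (\<lambda>r s. \<epsilon> r (f0 s)) = 0"
    by (rule det_fun_dir_zero) (use \<epsilon>0 in auto)
  with D\<epsilon>[OF f0(1)] f0(2) have "lam = (\<Sum>r<n. \<xi> r r)" by simp
  with D\<epsilon> have D0: "\<forall>f\<in>PiE {0..<n} (\<lambda>_. M). det_fun_dir n (\<lambda>r s. a0 r (f s)) (\<lambda>r s. \<epsilon> r (f s)) = 0"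
    by simp
  have "\<epsilon> i m = 0" if "m \<in> M" "i < n" for i m
  proof (rule det_fun_dir_replace_col_vanishing[OF f0(2) \<epsilon>0 _ \<open>i < n\<close>], intro allI impI)
    fix r0 assume "r0 < n"
    then have "f0(r0 := m) \<in> PiE {0..<n} (\<lambda>_. M)"
      using f0(1) \<open>m \<in> M\<close> by (auto simp: PiE_def extensional_def Pi_def)
    then show "det_fun_dir n (\<lambda>r s. a0 r ((f0(r0 := m)) s)) (\<lambda>r s. \<epsilon> r ((f0(r0 := m)) s)) = 0"
      using D0 by blast
  qed
  then have "\<forall>r<n. \<forall>m\<in>M. a1 r m = (\<Sum>l<n. \<xi> r l * a0 l m)"
    unfolding \<epsilon>_def by simp
  then show ?thesis by blast
qed

lemma det_fun_dir_proportional_iff_rows_combination: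
  fixes a0 a1 :: "nat \<Rightarrow> 'm \<Rightarrow> complex"
  assumes f0: "f0 \<in> PiE {0..<n} (\<lambda>_. M)" "minor n a0 f0 \<noteq> 0"
  shows "(\<exists>lam. \<forall>f\<in>PiE {0..<n} (\<lambda>_. M).
      det_fun_dir n (\<lambda>r s. a0 r (f s)) (\<lambda>r s. a1 r (f s)) = lam * minor n a0 f)
    \<longleftrightarrow> (\<exists>\<xi>. \<forall>r<n. \<forall>m\<in>M. a1 r m = (\<Sum>l<n. \<xi> r l * a0 l m))"
proof
  assume "\<exists>lam. \<forall>f\<in>PiE {0..<n} (\<lambda>_. M).
      det_fun_dir n (\<lambda>r s. a0 r (f s)) (\<lambda>r s. a1 r (f s)) = lam * minor n a0 f"
  then show "\<exists>\<xi>. \<forall>r<n. \<forall>m\<in>M. a1 r m = (\<Sum>l<n. \<xi> r l * a0 l m)"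
    using rows_combination_if_det_fun_dir_proportional[OF f0] by blast
next
  assume "\<exists>\<xi>. \<forall>r<n. \<forall>m\<in>M. a1 r m = (\<Sum>l<n. \<xi> r l * a0 l m)"
  then obtain \<xi> where \<xi>: "\<forall>r<n. \<forall>m\<in>M. a1 r m = (\<Sum>l<n. \<xi> r l * a0 l m)" by blast
  have "det_fun_dir n (\<lambda>r s. a0 r (f s)) (\<lambda>r s. a1 r (f s)) = (\<Sum>r<n. \<xi> r r) * minor n a0 f"
    if "f \<in> PiE {0..<n} (\<lambda>_. M)" for f
    unfolding minor_def using \<xi> that by (intro det_fun_dir_row_comb) (auto simp: PiE_def Pi_def)
  then show "\<exists>lam. \<forall>f\<in>PiE {0..<n} (\<lambda>_. M).
      det_fun_dir n (\<lambda>r s. a0 r (f s)) (\<lambda>r s. a1 r (f s)) = lam * minor n a0 f" by blast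
qed

section \<open>Paths and stability\<close>

lemma path_end_append: "path_end h j (as @ bs) = path_end h (path_end h j as) bs"
  by (induction as arbitrary: j) auto

lemma is_path_append: "is_path h t j (as @ bs) \<longleftrightarrow> is_path h t j as \<and> is_path h t (path_end h j as) bs"
  by (induction as arbitrary: j) auto

lemma path_mat_cong: "(\<forall>a\<in>set as. V a = V' a) \<Longrightarrow> path_mat h d V j as = path_mat h d V' j as"
  by (induction as arbitrary: j) auto

lemma path_mat_carrier:
  assumes "\<forall>a\<in>Q1. V a \<in> carrier_mat (d (h a)) (d (t a))"
  shows "set as \<subseteq> Q1 \<Longrightarrow> is_path h t j as \<Longrightarrow> path_mat h d V j as \<in> carrier_mat (d (path_end h j as)) (d j)"
  using assms by (induction as arbitrary: j) (auto intro!: mult_carrier_mat)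

lemma path_mat_snoc:
  assumes V: "\<forall>a\<in>Q1. V a \<in> carrier_mat (d (h a)) (d (t a))"
  shows "set as \<subseteq> Q1 \<Longrightarrow> is_path h t j as \<Longrightarrow> a \<in> Q1 \<Longrightarrow> t a = path_end h j as \<Longrightarrow>
     path_mat h d V j (as @ [a]) = V a * path_mat h d V j as"
proof (induction as arbitrary: j)
  case Nil
  then show ?case using V by (auto simp: left_mult_one_mat right_mult_one_mat)
next
  case (Cons b as)
  then have "path_mat h d V j ((b # as) @ [a]) = (V a * path_mat h d V (h b) as) * V b" by simp
  also have "\<dots> = V a * (path_mat h d V (h b) as * V b)"
    using Cons.prems V path_mat_carrier[where d = d and h = h and t = t, OF V, of as "h b"]
    by (intro assoc_mult_mat[of _ "d (h a)" "d (t a)" _ "d (h b)" _ "d (t b)"]) auto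
  finally show ?case by simp
qed

lemma paths_to_iff [simp]:
  "(j, as) \<in> paths_to Q0 Q1 h t i \<longleftrightarrow> j \<in> Q0 \<and> set as \<subseteq> Q1 \<and> is_path h t j as \<and> path_end h j as = i"
  unfolding paths_to_def by simp

lemma paths_to_snoc_iff:
  "(j, as @ [a]) \<in> paths_to Q0 Q1 h t i \<longleftrightarrow> (j, as) \<in> paths_to Q0 Q1 h t (t a) \<and> a \<in> Q1 \<and> h a = i"
  by (auto simp: is_path_append path_end_append)

locale acyclic_quiver =
  fixes Q0 :: "'v set" and Q1 :: "'e set" and h t :: "'e \<Rightarrow> 'v" and n d :: "'v \<Rightarrow> nat"
  assumes finite_Q0: "finite Q0" and finite_Q1: "finite Q1"
    and arrows_in: "\<forall>a\<in>Q1. h a \<in> Q0 \<and> t a \<in> Q0"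
    and acyclic: "no_oriented_cycle Q0 Q1 h t"
begin

lemma path_end_in: "j \<in> Q0 \<Longrightarrow> set as \<subseteq> Q1 \<Longrightarrow> is_path h t j as \<Longrightarrow> path_end h j as \<in> Q0"
  using arrows_in by (induction as arbitrary: j) auto

text \<open>A path visiting some vertex twice contains a cycle.\<close>

lemma path_vertices_distinct:
  assumes j: "j \<in> Q0" and as: "set as \<subseteq> Q1" "is_path h t j as"
    and pq: "p < q" "q \<le> length as"
  shows "path_end h j (take p as) \<noteq> path_end h j (take q as)"
proof
  assume eq: "path_end h j (take p as) = path_end h j (take q as)"
  define u where "u = path_end h j (take p as)"
  define bs where "bs = take (q - p) (drop p as)"
  have tq: "take q as = take p as @ bs" unfolding bs_def
    using take_add[of p "q - p" as] pq(1) by simp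
  have "is_path h t j (take q as)" using as(2) is_path_append[of h t j "take q as" "drop q as"] by simp
  then have "is_path h t u bs" "path_end h u bs = u"
    using eq unfolding u_def tq is_path_append path_end_append by simp_all
  moreover have "u \<in> Q0"
    unfolding u_def using as is_path_append[of h t j "take p as" "drop p as"]
    by (intro path_end_in[OF j]) (auto dest: in_set_takeD)
  moreover have "bs \<noteq> []" unfolding bs_def using pq by simp
  moreover have "set bs \<subseteq> Q1" unfolding bs_def using as(1) by (auto dest: in_set_takeD in_set_dropD)
  ultimately show False using acyclic unfolding no_oriented_cycle_def by blast
qed

lemma length_path_less_card:
  assumes j: "j \<in> Q0" and as: "set as \<subseteq> Q1" "is_path h t j as"
  shows "length as < card Q0"
proof (rule ccontr)
  assume "\<not> length as < card Q0"
  then have "card Q0 < card {0..length as}" by simp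
  moreover have "path_end h j (take k as) \<in> Q0" for k
    using as is_path_append[of h t j "take k as" "drop k as"]
    by (intro path_end_in[OF j]) (auto dest: in_set_takeD)
  moreover have "inj_on (\<lambda>k. path_end h j (take k as)) {0..length as}"
    using path_vertices_distinct[OF j as] by (intro linorder_inj_onI) auto
  ultimately show False using card_inj_on_le[of _ "{0..length as}" Q0] finite_Q0 by fastforce
qed

lemma finite_paths_to: "finite (paths_to Q0 Q1 h t i)"
proof (rule finite_subset)
  show "paths_to Q0 Q1 h t i \<subseteq> Q0 \<times> {as. set as \<subseteq> Q1 \<and> length as \<le> card Q0}"
    using length_path_less_card by fastforce
  show "finite (Q0 \<times> {as. set as \<subseteq> Q1 \<and> length as \<le> card Q0})"
    using finite_Q0 finite_Q1 by (intro finite_cartesian_product finite_lists_length_le)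
qed

end

lemma wf_point_arrows: "wf_point Q0 Q1 h t n d y \<Longrightarrow> \<forall>a\<in>Q1. fst y a \<in> carrier_mat (d (h a)) (d (t a))"
  and wf_point_arrow: "wf_point Q0 Q1 h t n d y \<Longrightarrow> a \<in> Q1 \<Longrightarrow> fst y a \<in> carrier_mat (d (h a)) (d (t a))"
  and wf_point_frame: "wf_point Q0 Q1 h t n d y \<Longrightarrow> i \<in> Q0 \<Longrightarrow> snd y i \<in> carrier_mat (d i) (n i)"
  unfolding wf_point_def by auto

lemma stable_imp_wf_point: "stable Q0 Q1 h t n d x \<Longrightarrow> wf_point Q0 Q1 h t n d x"
  unfolding stable_def by simp

context acyclic_quiver
begin

definition path_block :: "('v,'e) qpoint \<Rightarrow> 'v \<times> 'e list \<Rightarrow> complex mat" where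
  "path_block y \<gamma> = path_mat h d (fst y) (fst \<gamma>) (snd \<gamma>) * snd y (fst \<gamma>)"

context
  fixes y assumes y: "wf_point Q0 Q1 h t n d y"
begin

lemma path_block_carrier:
  assumes "\<gamma> \<in> paths_to Q0 Q1 h t i"
  shows "path_block y \<gamma> \<in> carrier_mat (d i) (n (fst \<gamma>))"
proof -
  obtain j as where \<gamma>: "\<gamma> = (j, as)" by (cases \<gamma>)
  have "path_mat h d (fst y) j as \<in> carrier_mat (d i) (d j)"
    using path_mat_carrier[where d = d and h = h and t = t, OF wf_point_arrows[OF y], of as j] assms
    unfolding \<gamma> by simp
  moreover have "snd y j \<in> carrier_mat (d j) (n j)" using wf_point_frame[OF y] assms unfolding \<gamma> by auto
  ultimately show ?thesis unfolding path_block_def \<gamma> by auto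
qed

lemma path_block_Nil:
  assumes "i \<in> Q0"
  shows "(i, []) \<in> paths_to Q0 Q1 h t i" "path_block y (i, []) = snd y i"
  using assms wf_point_frame[OF y assms] unfolding path_block_def by auto

lemma path_block_snoc:
  assumes \<gamma>: "(j, as) \<in> paths_to Q0 Q1 h t (t a)" and a: "a \<in> Q1"
  shows "(j, as @ [a]) \<in> paths_to Q0 Q1 h t (h a)" "path_block y (j, as @ [a]) = fst y a * path_block y (j, as)"
proof -
  show "(j, as @ [a]) \<in> paths_to Q0 Q1 h t (h a)"
    using \<gamma> a by (simp add: is_path_append path_end_append)
  have pm: "path_mat h d (fst y) j as \<in> carrier_mat (d (t a)) (d j)"
    using path_mat_carrier[where d = d and h = h and t = t, OF wf_point_arrows[OF y], of as j] \<gamma> by simp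
  have "path_block y (j, as @ [a]) = (fst y a * path_mat h d (fst y) j as) * snd y j"
    unfolding path_block_def
    using path_mat_snoc[where d = d and h = h and t = t, OF wf_point_arrows[OF y], of as j a] \<gamma> a
    by simp
  also have "\<dots> = fst y a * (path_mat h d (fst y) j as * snd y j)"
    using pm wf_point_arrow[OF y a] wf_point_frame[OF y, of j] \<gamma>
    by (intro assoc_mult_mat[of _ "d (h a)" "d (t a)" _ "d j" _ "n j"]) auto
  finally show "path_block y (j, as @ [a]) = fst y a * path_block y (j, as)"
    unfolding path_block_def by simp
qed

end

definition annihilates :: "('v,'e) qpoint \<Rightarrow> 'v \<Rightarrow> (nat \<Rightarrow> complex) \<Rightarrow> bool" where
  "annihilates x j w \<longleftrightarrow> (\<forall>\<gamma>\<in>paths_to Q0 Q1 h t j. \<forall>k<n (fst \<gamma>).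
      (\<Sum>s<d j. w s * path_block x \<gamma> $$ (s, k)) = 0)"

definition annihilator_perp :: "('v,'e) qpoint \<Rightarrow> 'v \<Rightarrow> complex vec set" where
  "annihilator_perp x j = {u \<in> carrier_vec (d j). \<forall>w. annihilates x j w \<longrightarrow> (\<Sum>s<d j. w s * u $ s) = 0}"

lemma subspace_annihilator_perp: "subspace_vec (d j) (annihilator_perp x j)"
proof -
  have "(\<Sum>s<d j. w s * (u + u') $ s) = (\<Sum>s<d j. w s * u $ s) + (\<Sum>s<d j. w s * u' $ s)"
    if "u' \<in> carrier_vec (d j)" for w :: "nat \<Rightarrow> complex" and u u' :: "complex vec"
    unfolding sum.distrib[symmetric] using that by (intro sum.cong) (auto simp: distrib_left)
  moreover have "(\<Sum>s<d j. w s * (c \<cdot>\<^sub>v u) $ s) = c * (\<Sum>s<d j. w s * u $ s)"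
    if "u \<in> carrier_vec (d j)" for w :: "nat \<Rightarrow> complex" and c u
    using that by (auto simp: sum_distrib_left mult.left_commute intro!: sum.cong)
  ultimately show ?thesis unfolding subspace_vec_def annihilator_perp_def by auto
qed

context
  fixes x assumes x: "wf_point Q0 Q1 h t n d x"
begin

lemma annihilator_perp_arrow:
  assumes a: "a \<in> Q1" and u: "u \<in> annihilator_perp x (t a)"
  shows "fst x a *\<^sub>v u \<in> annihilator_perp x (h a)"
proof -
  let ?X = "fst x a"
  have X: "?X \<in> carrier_mat (d (h a)) (d (t a))" using wf_point_arrow[OF x a] .
  have uc: "u \<in> carrier_vec (d (t a))" using u unfolding annihilator_perp_def by auto
  have "(\<Sum>r<d (h a). w r * (?X *\<^sub>v u) $ r) = 0" if w: "annihilates x (h a) w" for w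
  proof -
    define w' where "w' s = (\<Sum>r<d (h a). w r * ?X $$ (r, s))" for s
    have "annihilates x (t a) w'" unfolding annihilates_def
    proof (intro ballI allI impI)
      fix \<gamma> k assume \<gamma>: "\<gamma> \<in> paths_to Q0 Q1 h t (t a)" and k: "k < n (fst \<gamma>)"
      obtain j as where \<gamma>_eq: "\<gamma> = (j, as)" by (cases \<gamma>)
      note B = path_block_carrier[OF x \<gamma>] and snoc = path_block_snoc[OF x \<gamma>[unfolded \<gamma>_eq] a]
      have "(\<Sum>s<d (t a). w' s * path_block x \<gamma> $$ (s, k))
          = (\<Sum>r<d (h a). w r * path_block x (j, as @ [a]) $$ (r, k))"
        unfolding w'_def snoc(2) \<gamma>_eq using sum_row_mult_mat[OF X B[unfolded \<gamma>_eq]] k \<gamma>_eq by simp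
      also have "\<dots> = 0"
        using w[unfolded annihilates_def, rule_format, OF snoc(1)] k unfolding \<gamma>_eq by simp
      finally show "(\<Sum>s<d (t a). w' s * path_block x \<gamma> $$ (s, k)) = 0" .
    qed
    then have "(\<Sum>s<d (t a). w' s * u $ s) = 0" using u unfolding annihilator_perp_def by auto
    moreover have "(\<Sum>r<d (h a). w r * (?X *\<^sub>v u) $ r) = (\<Sum>s<d (t a). w' s * u $ s)"
      unfolding w'_def by (rule sum_row_mult_mat_vec[OF X uc])
    ultimately show ?thesis by simp
  qed
  then show ?thesis unfolding annihilator_perp_def using X uc by auto
qed

lemma annihilator_perp_frame:
  assumes i: "i \<in> Q0" and u: "u \<in> carrier_vec (n i)"
  shows "snd x i *\<^sub>v u \<in> annihilator_perp x i"
proof -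
  let ?E = "snd x i"
  have E: "?E \<in> carrier_mat (d i) (n i)" using wf_point_frame[OF x i] .
  have "(\<Sum>r<d i. w r * (?E *\<^sub>v u) $ r) = 0" if w: "annihilates x i w" for w
  proof -
    have "(\<Sum>r<d i. w r * ?E $$ (r, k)) = 0" if k: "k < n i" for k
      using w path_block_Nil[OF x i] k unfolding annihilates_def by fastforce
    moreover have "(\<Sum>r<d i. w r * (?E *\<^sub>v u) $ r) = (\<Sum>k<n i. (\<Sum>r<d i. w r * ?E $$ (r, k)) * u $ k)"
      by (rule sum_row_mult_mat_vec[OF E u])
    ultimately show ?thesis by simp
  qed
  then show ?thesis unfolding annihilator_perp_def using E u by auto
qed

end

text \<open>The orthogonal complements of the annihilators of the \<open>\<rho>\<^sub>j\<close> form a subrepresentation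
  containing the image of the framing, hence everything by stability.\<close>

lemma stable_annihilates_imp_zero:
  assumes st: "stable Q0 Q1 h t n d x" and j: "j \<in> Q0" and w: "annihilates x j w"
  shows "\<forall>s<d j. w s = 0"
proof -
  have x: "wf_point Q0 Q1 h t n d x" using st by (rule stable_imp_wf_point)
  let ?U = "annihilator_perp x"
  have "\<not> (\<exists>U. (\<forall>i\<in>Q0. subspace_vec (d i) (U i)) \<and> (\<exists>i\<in>Q0. U i \<noteq> carrier_vec (d i)) \<and>
      (\<forall>a\<in>Q1. \<forall>u\<in>U (t a). fst x a *\<^sub>v u \<in> U (h a)) \<and>
      (\<forall>i\<in>Q0. \<forall>u\<in>carrier_vec (n i). snd x i *\<^sub>v u \<in> U i))"
    using st unfolding stable_def by (rule conjunct2)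
  moreover have "\<forall>i\<in>Q0. subspace_vec (d i) (?U i)"
    using subspace_annihilator_perp by simp
  moreover have "\<forall>a\<in>Q1. \<forall>u\<in>?U (t a). fst x a *\<^sub>v u \<in> ?U (h a)"
    using annihilator_perp_arrow[OF x] by simp
  moreover have "\<forall>i\<in>Q0. \<forall>u\<in>carrier_vec (n i). snd x i *\<^sub>v u \<in> ?U i"
    using annihilator_perp_frame[OF x] by simp
  ultimately have "?U j = carrier_vec (d j)" using j by blast
  then have "vec (d j) (\<lambda>s. cnj (w s)) \<in> ?U j" by simp
  then have "(\<Sum>s<d j. w s * cnj (w s)) = 0" using w unfolding annihilator_perp_def by auto
  then show ?thesis using sum_mult_cnj_eq_0_imp_eq_0[of "{..<d j}" w] by simp
qed

end

section \<open>\<open>\<rho>\<^sub>i \<rho>\<^sub>i\<^sup>*\<close> as a Gram matrix\<close>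

context acyclic_quiver
begin

text \<open>The columns of \<open>\<rho>\<^sub>i\<close> are indexed by pairs of a path \<open>\<gamma>\<close> ending at \<open>i\<close> and a column
  of \<open>B\<^sub>\<gamma>\<close>; maximal minors of \<open>\<rho>\<^sub>i\<close> are indexed by maps \<open>{0..<d i} \<rightarrow> rho_cols i\<close>.\<close>

definition rho_cols :: "'v \<Rightarrow> (('v \<times> 'e list) \<times> nat) set" where
  "rho_cols i = Sigma (paths_to Q0 Q1 h t i) (\<lambda>\<gamma>. {..<n (fst \<gamma>)})"

definition rho_entry :: "('v,'e) qpoint \<Rightarrow> nat \<Rightarrow> ('v \<times> 'e list) \<times> nat \<Rightarrow> complex" where
  "rho_entry y r m = path_block y (fst m) $$ (r, snd m)"

abbreviation col_maps :: "'v \<Rightarrow> (nat \<Rightarrow> ('v \<times> 'e list) \<times> nat) set" where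
  "col_maps i \<equiv> PiE {0..<d i} (\<lambda>_. rho_cols i)"

lemma finite_rho_cols: "finite (rho_cols i)"
  unfolding rho_cols_def using finite_paths_to by auto

lemma finite_col_maps: "finite (col_maps i)"
  using finite_rho_cols by (simp add: finite_PiE)

lemma col_maps_in: "f \<in> col_maps i \<Longrightarrow> s < d i \<Longrightarrow> f s \<in> rho_cols i"
  by (auto simp: PiE_def Pi_def)

lemma rho_cols_iff: "((j, as), k) \<in> rho_cols i \<longleftrightarrow> (j, as) \<in> paths_to Q0 Q1 h t i \<and> k < n j"
  unfolding rho_cols_def by auto

lemma rhorho_eq_gram:
  "rhorho Q0 Q1 h t n d i y = mat (d i) (d i) (\<lambda>(r,c). \<Sum>m\<in>rho_cols i. rho_entry y r m * cnj (rho_entry y c m))"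
proof -
  have "(\<Sum>(j, as) \<in> paths_to Q0 Q1 h t i.
        let B = path_mat h d (fst y) j as * snd y j in
        \<Sum>k < n j. B $$ (r, k) * cnj (B $$ (c, k)))
      = (\<Sum>\<gamma> \<in> paths_to Q0 Q1 h t i. \<Sum>k < n (fst \<gamma>). rho_entry y r (\<gamma>,k) * cnj (rho_entry y c (\<gamma>,k)))" for r c
    by (rule sum.cong[OF refl]) (auto simp: rho_entry_def path_block_def Let_def split: prod.split)
  also have "\<dots> r c = (\<Sum>m\<in>rho_cols i. rho_entry y r m * cnj (rho_entry y c m))" for r c
    unfolding rho_cols_def using finite_paths_to by (subst sum.Sigma) (auto simp: case_prod_beta)
  finally show ?thesis unfolding rhorho_def by simp
qed

lemma det_rhorho_eq_sum_minors:
  "det (rhorho Q0 Q1 h t n d i y)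
     = of_real (1 / fact (d i) * (\<Sum>f\<in>col_maps i. (cmod (minor (d i) (rho_entry y) f))\<^sup>2))"
proof -
  have "of_nat (fact (d i)) * det (rhorho Q0 Q1 h t n d i y)
     = (\<Sum>f\<in>col_maps i. minor (d i) (rho_entry y) f * cnj (minor (d i) (rho_entry y) f))"
    unfolding rhorho_eq_gram det_mat_eq_det_fun by (rule cauchy_binet_gram[OF finite_rho_cols])
  then show ?thesis unfolding of_real_sum_cmod_sq[symmetric] by (simp add: field_simps)
qed

lemma logdet_eq_ln_sum_minors:
  "logdet Q0 Q1 h t n d i y = ln (1 / fact (d i) * (\<Sum>f\<in>col_maps i. (cmod (minor (d i) (rho_entry y) f))\<^sup>2))"
  by (simp only: logdet_def det_rhorho_eq_sum_minors Re_complex_of_real)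

text \<open>A kernel vector \<open>u\<close> of \<open>\<rho>\<^sub>i \<rho>\<^sub>i\<^sup>*\<close> gives \<open>\<parallel>u\<^sup>* \<rho>\<^sub>i\<parallel>\<^sup>2 = u\<^sup>* \<rho>\<^sub>i \<rho>\<^sub>i\<^sup>* u = 0\<close>, so \<open>u\<^sup>*\<close>
  annihilates \<open>\<rho>\<^sub>i\<close>.\<close>

lemma det_rhorho_nonzero:
  assumes st: "stable Q0 Q1 h t n d x" and i: "i \<in> Q0"
  shows "det (rhorho Q0 Q1 h t n d i x) \<noteq> 0"
proof
  let ?R = "rhorho Q0 Q1 h t n d i x"
  assume "det ?R = 0"
  moreover have R: "?R \<in> carrier_mat (d i) (d i)" unfolding rhorho_eq_gram by simp
  ultimately obtain u where u: "u \<in> carrier_vec (d i)" "u \<noteq> 0\<^sub>v (d i)" "?R *\<^sub>v u = 0\<^sub>v (d i)"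
    using det_0_iff_vec_prod_zero[OF R] by auto
  define w where "w m = (\<Sum>r<d i. cnj (u $ r) * rho_entry x r m)" for m
  have cnj_w: "cnj (w m) = (\<Sum>c<d i. u $ c * cnj (rho_entry x c m))" for m
    unfolding w_def by (simp add: cnj_sum)
  have "(\<Sum>m\<in>rho_cols i. w m * cnj (w m))
      = (\<Sum>m\<in>rho_cols i. \<Sum>r<d i. \<Sum>c<d i. cnj (u $ r) * (rho_entry x r m * cnj (rho_entry x c m) * u $ c))"
    unfolding cnj_w unfolding w_def sum_product by (intro sum.cong refl) (simp add: algebra_simps)
  also have "\<dots> = (\<Sum>r<d i. \<Sum>c<d i. \<Sum>m\<in>rho_cols i. cnj (u $ r) * (rho_entry x r m * cnj (rho_entry x c m) * u $ c))"
    by (subst sum.swap) (simp add: sum.swap[of _ "rho_cols i"])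
  also have "\<dots> = (\<Sum>r<d i. cnj (u $ r) * (?R *\<^sub>v u) $ r)"
  proof (rule sum.cong[OF refl])
    fix r assume "r \<in> {..<d i}"
    then have "(?R *\<^sub>v u) $ r = (\<Sum>c<d i. (\<Sum>m\<in>rho_cols i. rho_entry x r m * cnj (rho_entry x c m)) * u $ c)"
      using index_mult_mat_vec_sum[OF R u(1), of r] by (simp add: rhorho_eq_gram)
    then show "(\<Sum>c<d i. \<Sum>m\<in>rho_cols i. cnj (u $ r) * (rho_entry x r m * cnj (rho_entry x c m) * u $ c))
        = cnj (u $ r) * (?R *\<^sub>v u) $ r"
      by (simp add: sum_distrib_left sum_distrib_right mult.assoc)
  qed
  also have "\<dots> = 0" using u(1,3) by simp
  finally have "\<forall>m\<in>rho_cols i. w m = 0"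
    by (intro sum_mult_cnj_eq_0_imp_eq_0[OF finite_rho_cols])
  then have "annihilates x i (\<lambda>r. cnj (u $ r))"
    unfolding annihilates_def w_def rho_entry_def rho_cols_def by auto
  then have "\<forall>r<d i. cnj (u $ r) = 0" by (rule stable_annihilates_imp_zero[OF st i])
  then have "\<forall>r<d i. u $ r = 0" by simp
  then show False using u(1,2) by (auto intro!: eq_vecI)
qed

lemma sum_sq_minors_pos:
  assumes "stable Q0 Q1 h t n d x" "i \<in> Q0"
  shows "(\<Sum>f\<in>col_maps i. (cmod (minor (d i) (rho_entry x) f))\<^sup>2) > 0"
  using det_rhorho_nonzero[OF assms] sum_nonneg[of "col_maps i" "\<lambda>f. (cmod (minor (d i) (rho_entry x) f))\<^sup>2"]
  unfolding det_rhorho_eq_sum_minors by fastforce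

lemma ex_nonzero_minor:
  assumes "stable Q0 Q1 h t n d x" "i \<in> Q0"
  obtains f0 where "f0 \<in> col_maps i" "minor (d i) (rho_entry x) f0 \<noteq> 0"
proof -
  have "(\<Sum>f\<in>col_maps i. (cmod (minor (d i) (rho_entry x) f))\<^sup>2) \<noteq> 0"
    using sum_sq_minors_pos[OF assms] by simp
  then show thesis using that sum.neutral by force
qed
end

definition holo_mat :: "(complex \<Rightarrow> complex mat) \<Rightarrow> nat \<Rightarrow> nat \<Rightarrow> bool" where
  "holo_mat F nr nc \<longleftrightarrow> (\<forall>z. F z \<in> carrier_mat nr nc)
     \<and> (\<forall>r<nr. \<forall>c<nc. (\<lambda>z. F z $$ (r, c)) holomorphic_on UNIV)"

definition has_mat_deriv_0 :: "(complex \<Rightarrow> complex mat) \<Rightarrow> complex mat \<Rightarrow> nat \<Rightarrow> nat \<Rightarrow> bool" where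
  "has_mat_deriv_0 F F1 nr nc \<longleftrightarrow> (\<forall>z. F z \<in> carrier_mat nr nc) \<and> F1 \<in> carrier_mat nr nc
     \<and> (\<forall>r<nr. \<forall>c<nc. ((\<lambda>z. F z $$ (r, c)) has_field_derivative F1 $$ (r, c)) (at 0))"

definition mat_deriv_0 :: "(complex \<Rightarrow> complex mat) \<Rightarrow> nat \<Rightarrow> nat \<Rightarrow> complex mat" where
  "mat_deriv_0 F nr nc = mat nr nc (\<lambda>(r, c). deriv (\<lambda>z. F z $$ (r, c)) 0)"

lemma holo_mat_mult:
  assumes A: "holo_mat A nr m" and B: "holo_mat B m nc"
  shows "holo_mat (\<lambda>z. A z * B z) nr nc"
proof -
  have Ac: "A z \<in> carrier_mat nr m" and Bc: "B z \<in> carrier_mat m nc" for z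
    using A B unfolding holo_mat_def by auto
  have "(\<lambda>z. (A z * B z) $$ (r, c)) = (\<lambda>z. \<Sum>s<m. A z $$ (r, s) * B z $$ (s, c))"
    if "r < nr" "c < nc" for r c
    using index_mult_mat_sum[OF Ac Bc that] by auto
  moreover have "(\<lambda>z. \<Sum>s<m. A z $$ (r, s) * B z $$ (s, c)) holomorphic_on UNIV"
    if "r < nr" "c < nc" for r c
    using A B that unfolding holo_mat_def by (intro holomorphic_on_sum holomorphic_on_mult) auto
  ultimately show ?thesis
    unfolding holo_mat_def using mult_carrier_mat[OF Ac Bc] by auto
qed

lemma holo_mat_affine:
  "X \<in> carrier_mat nr nc \<Longrightarrow> Y \<in> carrier_mat nr nc \<Longrightarrow> holo_mat (\<lambda>z. X + z \<cdot>\<^sub>m Y) nr nc"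
  unfolding holo_mat_def by (auto intro!: holomorphic_intros)

lemma holo_mat_const: "X \<in> carrier_mat nr nc \<Longrightarrow> holo_mat (\<lambda>z. X) nr nc"
  unfolding holo_mat_def by auto

lemma holo_mat_imp_has_mat_deriv_0: "holo_mat F nr nc \<Longrightarrow> has_mat_deriv_0 F (mat_deriv_0 F nr nc) nr nc"
  unfolding holo_mat_def has_mat_deriv_0_def mat_deriv_0_def
  by (auto intro: holomorphic_derivI)

lemma has_mat_deriv_0_unique: "has_mat_deriv_0 F F1 nr nc \<Longrightarrow> has_mat_deriv_0 F F2 nr nc \<Longrightarrow> F1 = F2"
  unfolding has_mat_deriv_0_def by (auto intro!: eq_matI) (meson DERIV_unique)

lemma has_mat_deriv_0_mult:
  assumes A: "has_mat_deriv_0 A A1 nr m" and B: "has_mat_deriv_0 B B1 m nc"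
  shows "has_mat_deriv_0 (\<lambda>z. A z * B z) (A 0 * B1 + A1 * B 0) nr nc"
proof -
  have Ac: "A z \<in> carrier_mat nr m" and Bc: "B z \<in> carrier_mat m nc" for z
    using A B unfolding has_mat_deriv_0_def by auto
  have A1: "A1 \<in> carrier_mat nr m" and B1: "B1 \<in> carrier_mat m nc"
    using A B unfolding has_mat_deriv_0_def by auto
  have "((\<lambda>z. (A z * B z) $$ (r, c)) has_field_derivative (A 0 * B1 + A1 * B 0) $$ (r, c)) (at 0)"
    if rc: "r < nr" "c < nc" for r c
  proof -
    have "(\<lambda>z. (A z * B z) $$ (r, c)) = (\<lambda>z. \<Sum>s<m. A z $$ (r, s) * B z $$ (s, c))"
      using index_mult_mat_sum[OF Ac Bc rc] by auto
    moreover have "(A 0 * B1 + A1 * B 0) $$ (r, c) = (A 0 * B1) $$ (r, c) + (A1 * B 0) $$ (r, c)"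
      using rc A1 Bc[of 0] by (intro index_add_mat(1)) auto
    then have "(A 0 * B1 + A1 * B 0) $$ (r, c)
        = (\<Sum>s<m. A 0 $$ (r, s) * B1 $$ (s, c) + A1 $$ (r, s) * B 0 $$ (s, c))"
      using index_mult_mat_sum[OF Ac B1 rc] index_mult_mat_sum[OF A1 Bc rc]
      by (simp add: sum.distrib del: index_mult_mat)
    moreover have "((\<lambda>z. \<Sum>s<m. A z $$ (r, s) * B z $$ (s, c)) has_field_derivative
        (\<Sum>s<m. A 0 $$ (r, s) * B1 $$ (s, c) + A1 $$ (r, s) * B 0 $$ (s, c))) (at 0)"
      using A B rc unfolding has_mat_deriv_0_def by (intro DERIV_sum DERIV_mult') auto
    ultimately show ?thesis by simp
  qed
  moreover have "A 0 * B1 + A1 * B 0 \<in> carrier_mat nr nc" using Ac Bc A1 B1 by auto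
  ultimately show ?thesis unfolding has_mat_deriv_0_def using mult_carrier_mat[OF Ac Bc] by auto
qed

lemma has_mat_deriv_0_affine:
  "X \<in> carrier_mat nr nc \<Longrightarrow> Y \<in> carrier_mat nr nc \<Longrightarrow> has_mat_deriv_0 (\<lambda>z. X + z \<cdot>\<^sub>m Y) Y nr nc"
  unfolding has_mat_deriv_0_def by (auto intro!: derivative_eq_intros)

lemma fst_padd: "fst (padd x z v) a = fst x a + z \<cdot>\<^sub>m fst v a"
  and snd_padd: "snd (padd x z v) i = snd x i + z \<cdot>\<^sub>m snd v i"
  unfolding padd_def by auto

context acyclic_quiver
begin

lemma wf_point_padd:
  "wf_point Q0 Q1 h t n d x \<Longrightarrow> wf_point Q0 Q1 h t n d v \<Longrightarrow> wf_point Q0 Q1 h t n d (padd x z v)"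
  unfolding wf_point_def fst_padd snd_padd by auto

lemma path_block_cong:
  assumes "\<forall>a\<in>Q1. fst y a = fst y' a" "\<forall>j\<in>Q0. snd y j = snd y' j"
    and "\<gamma> \<in> paths_to Q0 Q1 h t i"
  shows "path_block y \<gamma> = path_block y' \<gamma>"
proof -
  obtain j as where \<gamma>: "\<gamma> = (j, as)" by (cases \<gamma>)
  have "path_mat h d (fst y) j as = path_mat h d (fst y') j as"
    using assms unfolding \<gamma> by (intro path_mat_cong) auto
  then show ?thesis using assms unfolding \<gamma> path_block_def by simp
qed

lemma is_GL_D:
  assumes "is_GL Q0 d g k" "i \<in> Q0"
  shows "g i \<in> carrier_mat (d i) (d i)" "k i \<in> carrier_mat (d i) (d i)"
    "g i * k i = 1\<^sub>m (d i)" "k i * g i = 1\<^sub>m (d i)"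
  using assms unfolding is_GL_def by auto

lemma det_GL_nonzero:
  assumes "is_GL Q0 d g k" "i \<in> Q0"
  shows "det (g i) \<noteq> 0"
proof -
  have "det (g i) * det (k i) = 1"
    using det_mult[OF is_GL_D(1,2)[OF assms]] is_GL_D(3)[OF assms] by simp
  then show ?thesis by auto
qed

lemma wf_point_gl_act:
  "wf_point Q0 Q1 h t n d x \<Longrightarrow> is_GL Q0 d g k \<Longrightarrow> wf_point Q0 Q1 h t n d (gl_act h t g k x)"
  using arrows_in unfolding wf_point_def gl_act_def is_GL_def by (auto intro!: mult_carrier_mat)

text \<open>The inner factors \<open>k\<^sub>t\<^sub>(\<^sub>a\<^sub>) g\<^sub>t\<^sub>(\<^sub>a\<^sub>)\<close> cancel along the path.\<close>

lemma path_block_gl_act: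
  assumes y: "wf_point Q0 Q1 h t n d y" and GL: "is_GL Q0 d g k"
  shows "(j, as) \<in> paths_to Q0 Q1 h t i \<Longrightarrow> path_block (gl_act h t g k y) (j, as) = g i * path_block y (j, as)"
proof (induction as arbitrary: i rule: rev_induct)
  case Nil
  then have "j = i" "i \<in> Q0" by auto
  then show ?case
    using path_block_Nil(2)[OF y, of i] path_block_Nil(2)[OF wf_point_gl_act[OF y GL], of i]
    by (simp add: gl_act_def)
next
  case (snoc a as)
  then have \<gamma>: "(j, as) \<in> paths_to Q0 Q1 h t (t a)" and a: "a \<in> Q1" and i: "i = h a"
    unfolding paths_to_snoc_iff by auto
  have ta: "t a \<in> Q0" and ha: "h a \<in> Q0" using arrows_in a by auto
  have B: "path_block y (j, as) \<in> carrier_mat (d (t a)) (n j)"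
    using path_block_carrier[OF y \<gamma>] by simp
  note G = is_GL_D[OF GL ta] is_GL_D[OF GL ha] and V = wf_point_arrow[OF y a]
  have "path_block (gl_act h t g k y) (j, as @ [a])
      = (g (h a) * fst y a * k (t a)) * (g (t a) * path_block y (j, as))"
    using path_block_snoc(2)[OF wf_point_gl_act[OF y GL] \<gamma> a] snoc.IH[OF \<gamma>] by (simp add: gl_act_def)
  also have "\<dots> = g (h a) * (fst y a * path_block y (j, as))"
    using G V B by (intro mult_cancel_inner_mat) auto
  also have "\<dots> = g i * path_block y (j, as @ [a])"
    using path_block_snoc(2)[OF y \<gamma> a] i by simp
  finally show ?case .
qed

lemma padd_gl_act:
  assumes x: "wf_point Q0 Q1 h t n d x" and v: "wf_point Q0 Q1 h t n d v" and GL: "is_GL Q0 d g k"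
  shows "\<forall>a\<in>Q1. fst (padd (gl_act h t g k x) z (gl_act h t g k v)) a = fst (gl_act h t g k (padd x z v)) a"
    and "\<forall>j\<in>Q0. snd (padd (gl_act h t g k x) z (gl_act h t g k v)) j = snd (gl_act h t g k (padd x z v)) j"
  using arrows_in is_GL_D[OF GL] wf_point_arrow[OF x] wf_point_arrow[OF v]
    wf_point_frame[OF x] wf_point_frame[OF v]
  by (auto simp: fst_padd snd_padd gl_act_def intro!: conj_add_smult_mat mult_add_smult_mat)

context
  fixes x v
  assumes x: "wf_point Q0 Q1 h t n d x" and v: "wf_point Q0 Q1 h t n d v"
begin

lemma path_block_padd_0:
  assumes "\<gamma> \<in> paths_to Q0 Q1 h t i"
  shows "path_block (padd x 0 v) \<gamma> = path_block x \<gamma>"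
proof (rule path_block_cong[OF _ _ assms])
  show "\<forall>a\<in>Q1. fst (padd x 0 v) a = fst x a"
    using add_smult_zero_mat[OF wf_point_arrow[OF x] wf_point_arrow[OF v]] by (simp add: fst_padd)
  show "\<forall>j\<in>Q0. snd (padd x 0 v) j = snd x j"
    using add_smult_zero_mat[OF wf_point_frame[OF x] wf_point_frame[OF v]] by (simp add: snd_padd)
qed

lemma holo_mat_path_mat:
  "j \<in> Q0 \<Longrightarrow> set as \<subseteq> Q1 \<Longrightarrow> is_path h t j as \<Longrightarrow>
    holo_mat (\<lambda>z. path_mat h d (fst (padd x z v)) j as) (d (path_end h j as)) (d j)"
proof (induction as arbitrary: j)
  case Nil
  then show ?case by (simp add: holo_mat_const)
next
  case (Cons a as)
  have a: "a \<in> Q1" and ta: "t a = j" and ha: "h a \<in> Q0" using Cons.prems arrows_in by auto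
  have "holo_mat (\<lambda>z. path_mat h d (fst (padd x z v)) (h a) as * (fst x a + z \<cdot>\<^sub>m fst v a))
      (d (path_end h (h a) as)) (d j)"
    by (rule holo_mat_mult[OF Cons.IH holo_mat_affine])
      (use Cons.prems ha a ta wf_point_arrow[OF x a] wf_point_arrow[OF v a] in auto)
  moreover have "(\<lambda>z. path_mat h d (fst (padd x z v)) (h a) as * fst (padd x z v) a)
      = (\<lambda>z. path_mat h d (fst (padd x z v)) (h a) as * (fst x a + z \<cdot>\<^sub>m fst v a))"
    by (intro ext) (simp only: fst_padd)
  ultimately show ?case using ta by simp
qed

lemma holo_mat_path_block:
  assumes "\<gamma> \<in> paths_to Q0 Q1 h t i"
  shows "holo_mat (\<lambda>z. path_block (padd x z v) \<gamma>) (d i) (n (fst \<gamma>))"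
proof -
  obtain j as where \<gamma>: "\<gamma> = (j, as)" by (cases \<gamma>)
  then have j: "j \<in> Q0" and as: "set as \<subseteq> Q1" "is_path h t j as" "path_end h j as = i"
    using assms by auto
  have "holo_mat (\<lambda>z. path_mat h d (fst (padd x z v)) j as * (snd x j + z \<cdot>\<^sub>m snd v j)) (d i) (n j)"
    using holo_mat_mult[OF holo_mat_path_mat[OF j as(1,2)] holo_mat_affine[OF wf_point_frame[OF x j]
          wf_point_frame[OF v j]]] as(3) by simp
  then show ?thesis unfolding path_block_def \<gamma> by (simp add: snd_padd)
qed

end

text \<open>The vertex \<open>i\<close> only fixes the number of rows.\<close>

definition path_block_deriv :: "('v,'e) qpoint \<Rightarrow> ('v,'e) qpoint \<Rightarrow> 'v \<Rightarrow> 'v \<times> 'e list \<Rightarrow> complex mat" where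
  "path_block_deriv x v i \<gamma> = mat_deriv_0 (\<lambda>z. path_block (padd x z v) \<gamma>) (d i) (n (fst \<gamma>))"

context
  fixes x v
  assumes x: "wf_point Q0 Q1 h t n d x" and v: "wf_point Q0 Q1 h t n d v"
begin

lemma has_mat_deriv_0_path_block:
  assumes "\<gamma> \<in> paths_to Q0 Q1 h t i"
  shows "has_mat_deriv_0 (\<lambda>z. path_block (padd x z v) \<gamma>) (path_block_deriv x v i \<gamma>) (d i) (n (fst \<gamma>))"
  unfolding path_block_deriv_def by (rule holo_mat_imp_has_mat_deriv_0[OF holo_mat_path_block[OF x v assms]])

lemma path_block_deriv_carrier:
  assumes "\<gamma> \<in> paths_to Q0 Q1 h t i"
  shows "path_block_deriv x v i \<gamma> \<in> carrier_mat (d i) (n (fst \<gamma>))"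
  using has_mat_deriv_0_path_block[OF assms] unfolding has_mat_deriv_0_def by auto

lemma path_block_deriv_Nil:
  assumes i: "i \<in> Q0"
  shows "path_block_deriv x v i (i, []) = snd v i"
proof -
  have "has_mat_deriv_0 (\<lambda>z. path_block (padd x z v) (i, [])) (snd v i) (d i) (n i)"
    using has_mat_deriv_0_affine[OF wf_point_frame[OF x i] wf_point_frame[OF v i]]
      path_block_Nil(2)[OF wf_point_padd[OF x v] i] by (simp add: snd_padd)
  then show ?thesis
    using has_mat_deriv_0_unique has_mat_deriv_0_path_block[OF path_block_Nil(1)[OF x i]] by fastforce
qed

lemma path_block_deriv_snoc:
  assumes \<gamma>: "(j, as) \<in> paths_to Q0 Q1 h t (t a)" and a: "a \<in> Q1"
  shows "path_block_deriv x v (h a) (j, as @ [a])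
    = fst x a * path_block_deriv x v (t a) (j, as) + fst v a * path_block x (j, as)"
proof -
  note X = wf_point_arrow[OF x a] and W = wf_point_arrow[OF v a]
  have "(\<lambda>z. path_block (padd x z v) (j, as @ [a]))
      = (\<lambda>z. (fst x a + z \<cdot>\<^sub>m fst v a) * path_block (padd x z v) (j, as))"
    using path_block_snoc(2)[OF wf_point_padd[OF x v] \<gamma> a] by (simp add: fst_padd)
  moreover have "fst x a + 0 \<cdot>\<^sub>m fst v a = fst x a" using X W by (rule add_smult_zero_mat)
  then have "has_mat_deriv_0 (\<lambda>z. (fst x a + z \<cdot>\<^sub>m fst v a) * path_block (padd x z v) (j, as))
      (fst x a * path_block_deriv x v (t a) (j, as) + fst v a * path_block x (j, as)) (d (h a)) (n j)"
    using has_mat_deriv_0_mult[OF has_mat_deriv_0_affine[OF X W] has_mat_deriv_0_path_block[OF \<gamma>]]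
      path_block_padd_0[OF x v \<gamma>] by simp
  ultimately show ?thesis
    using has_mat_deriv_0_unique has_mat_deriv_0_path_block[OF path_block_snoc(1)[OF x \<gamma> a]] by fastforce
qed

end

end

context acyclic_quiver
begin

context
  fixes x v
  assumes x: "wf_point Q0 Q1 h t n d x" and v: "wf_point Q0 Q1 h t n d v"
begin

lemma rho_entry_padd_0: "m \<in> rho_cols i \<Longrightarrow> rho_entry (padd x 0 v) r m = rho_entry x r m"
  unfolding rho_entry_def rho_cols_def using path_block_padd_0[OF x v] by auto

lemma holomorphic_rho_entry:
  assumes "m \<in> rho_cols i" "r < d i"
  shows "(\<lambda>z. rho_entry (padd x z v) r m) holomorphic_on UNIV"
  using holo_mat_path_block[OF x v, of "fst m" i] assms unfolding rho_entry_def rho_cols_def holo_mat_def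
  by auto

lemma has_field_derivative_rho_entry:
  assumes "m \<in> rho_cols i" "r < d i"
  shows "((\<lambda>z. rho_entry (padd x z v) r m) has_field_derivative
      path_block_deriv x v i (fst m) $$ (r, snd m)) (at 0)"
  using has_mat_deriv_0_path_block[OF x v, of "fst m" i] assms
  unfolding rho_entry_def rho_cols_def has_mat_deriv_0_def by auto

lemma minor_padd_0:
  assumes "f \<in> col_maps i"
  shows "minor (d i) (rho_entry (padd x 0 v)) f = minor (d i) (rho_entry x) f"
  unfolding minor_def by (intro det_fun_cong allI impI rho_entry_padd_0) (rule col_maps_in[OF assms])

lemma holomorphic_minor:
  assumes "f \<in> col_maps i"
  shows "(\<lambda>z. minor (d i) (rho_entry (padd x z v)) f) holomorphic_on UNIV"
  unfolding minor_def
  by (intro holomorphic_on_det_fun allI impI holomorphic_rho_entry) (rule col_maps_in[OF assms])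

lemma deriv_minor:
  assumes f: "f \<in> col_maps i"
  shows "deriv (\<lambda>z. minor (d i) (rho_entry (padd x z v)) f) 0
     = det_fun_dir (d i) (\<lambda>r s. rho_entry x r (f s)) (\<lambda>r s. path_block_deriv x v i (fst (f s)) $$ (r, snd (f s)))"
proof -
  have "((\<lambda>z. minor (d i) (rho_entry (padd x z v)) f) has_field_derivative
      det_fun_dir (d i) (\<lambda>r s. rho_entry (padd x 0 v) r (f s))
        (\<lambda>r s. path_block_deriv x v i (fst (f s)) $$ (r, snd (f s)))) (at 0)"
    unfolding minor_def
    by (intro has_field_derivative_det_fun allI impI has_field_derivative_rho_entry) (rule col_maps_in[OF f])
  moreover have "det_fun_dir (d i) (\<lambda>r s. rho_entry (padd x 0 v) r (f s))
        (\<lambda>r s. path_block_deriv x v i (fst (f s)) $$ (r, snd (f s)))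
     = det_fun_dir (d i) (\<lambda>r s. rho_entry x r (f s))
        (\<lambda>r s. path_block_deriv x v i (fst (f s)) $$ (r, snd (f s)))"
    by (intro det_fun_dir_cong allI impI rho_entry_padd_0 refl) (rule col_maps_in[OF f])
  ultimately show ?thesis by (simp add: DERIV_imp_deriv)
qed

end

lemma minor_gl_act:
  assumes y: "wf_point Q0 Q1 h t n d y" and GL: "is_GL Q0 d g k" and i: "i \<in> Q0"
    and f: "f \<in> col_maps i"
  shows "minor (d i) (rho_entry (gl_act h t g k y)) f = det (g i) * minor (d i) (rho_entry y) f"
proof -
  let ?A = "mat (d i) (d i) (\<lambda>(r, s). rho_entry y r (f s))"
  have gi: "g i \<in> carrier_mat (d i) (d i)" by (rule is_GL_D(1)[OF GL i])
  have "rho_entry (gl_act h t g k y) r (f s) = (g i * ?A) $$ (r, s)" if "r < d i" "s < d i" for r s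
  proof -
    obtain j as c where fs: "f s = ((j, as), c)" by (metis prod.collapse)
    then have \<gamma>: "(j, as) \<in> paths_to Q0 Q1 h t i" and c: "c < n j"
      using col_maps_in[OF f \<open>s < d i\<close>] by (auto simp: rho_cols_iff)
    have "rho_entry (gl_act h t g k y) r (f s) = (g i * path_block y (j, as)) $$ (r, c)"
      unfolding rho_entry_def fs using path_block_gl_act[OF y GL \<gamma>] by simp
    also have "\<dots> = (\<Sum>l<d i. g i $$ (r, l) * rho_entry y l (f s))"
      using index_mult_mat_sum[OF gi path_block_carrier[OF y \<gamma>, simplified] \<open>r < d i\<close> c]
      unfolding rho_entry_def fs
      by simp
    also have "\<dots> = (g i * ?A) $$ (r, s)"
      using index_mult_mat_sum[OF gi _ that, of ?A] that by simp
    finally show ?thesis .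
  qed
  moreover have "g i * ?A \<in> carrier_mat (d i) (d i)" using gi by simp
  ultimately have "mat (d i) (d i) (\<lambda>(r, s). rho_entry (gl_act h t g k y) r (f s)) = g i * ?A"
    by (intro eq_matI) auto
  then have "minor (d i) (rho_entry (gl_act h t g k y)) f = det (g i * ?A)"
    unfolding minor_def det_mat_eq_det_fun[symmetric] by simp
  also have "\<dots> = det (g i) * det ?A" by (rule det_mult[OF gi]) simp
  finally show ?thesis unfolding minor_def det_mat_eq_det_fun .
qed

lemma logdet_padd_gl_act:
  assumes x: "wf_point Q0 Q1 h t n d x" and v: "wf_point Q0 Q1 h t n d v" and GL: "is_GL Q0 d g k"
    and i: "i \<in> Q0"
  shows "logdet Q0 Q1 h t n d i (padd (gl_act h t g k x) z (gl_act h t g k v))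
    = ln ((cmod (det (g i)))\<^sup>2 / fact (d i) * (\<Sum>f\<in>col_maps i. (cmod (minor (d i) (rho_entry (padd x z v)) f))\<^sup>2))"
proof -
  have "minor (d i) (rho_entry (padd (gl_act h t g k x) z (gl_act h t g k v))) f
      = det (g i) * minor (d i) (rho_entry (padd x z v)) f" if f: "f \<in> col_maps i" for f
  proof -
    have E: "rho_entry (padd (gl_act h t g k x) z (gl_act h t g k v)) r m
        = rho_entry (gl_act h t g k (padd x z v)) r m" if "m \<in> rho_cols i" for r m
      using path_block_cong[OF padd_gl_act[OF x v GL], of "fst m" i] that
      unfolding rho_entry_def rho_cols_def by auto
    then have "minor (d i) (rho_entry (padd (gl_act h t g k x) z (gl_act h t g k v))) f
        = minor (d i) (rho_entry (gl_act h t g k (padd x z v))) f"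
      unfolding minor_def by (intro det_fun_cong allI impI E) (rule col_maps_in[OF f])
    also have "\<dots> = det (g i) * minor (d i) (rho_entry (padd x z v)) f"
      by (rule minor_gl_act[OF wf_point_padd[OF x v] GL i f])
    finally show ?thesis .
  qed
  then show ?thesis
    unfolding logdet_eq_ln_sum_minors
    by (simp add: norm_mult power_mult_distrib sum_distrib_left cong: sum.cong)
qed

end

section \<open>The Levi form of \<open>log det (\<rho>\<^sub>i \<rho>\<^sub>i\<^sup>*)\<close>\<close>

context acyclic_quiver
begin

definition levi_logdet :: "('v,'e) qpoint \<Rightarrow> ('v,'e) qpoint \<Rightarrow> 'v \<Rightarrow> real" where
  "levi_logdet x v i = cs_defect (col_maps i) (\<lambda>f. deriv (\<lambda>z. minor (d i) (rho_entry (padd x z v)) f) 0)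
      (minor (d i) (rho_entry x)) / (\<Sum>f\<in>col_maps i. (cmod (minor (d i) (rho_entry x) f))\<^sup>2)\<^sup>2"

context
  fixes x v
  assumes st: "stable Q0 Q1 h t n d x" and v: "wf_point Q0 Q1 h t n d v"
begin

lemma has_levi_0_ln_sum_minors:
  assumes i: "i \<in> Q0" and C: "C > 0"
  shows "has_levi_0 (\<lambda>z. ln (C * (\<Sum>f\<in>col_maps i. (cmod (minor (d i) (rho_entry (padd x z v)) f))\<^sup>2)))
    (levi_logdet x v i)"
proof -
  note x = stable_imp_wf_point[OF st]
  have "(\<Sum>f\<in>col_maps i. (cmod (minor (d i) (rho_entry (padd x 0 v)) f))\<^sup>2)
      = (\<Sum>f\<in>col_maps i. (cmod (minor (d i) (rho_entry x) f))\<^sup>2)"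
    using minor_padd_0[OF x v] by simp
  moreover have "cs_defect (col_maps i) (\<lambda>f. deriv (\<lambda>z. minor (d i) (rho_entry (padd x z v)) f) 0)
      (\<lambda>f. minor (d i) (rho_entry (padd x 0 v)) f)
    = cs_defect (col_maps i) (\<lambda>f. deriv (\<lambda>z. minor (d i) (rho_entry (padd x z v)) f) 0)
      (minor (d i) (rho_entry x))"
    using minor_padd_0[OF x v] by (intro cs_defect_cong) auto
  moreover note has_levi_0_ln_sum_sq[OF _ C, of "col_maps i" "\<lambda>f z. minor (d i) (rho_entry (padd x z v)) f"]
  ultimately show ?thesis
    using holomorphic_minor[OF x v] sum_sq_minors_pos[OF st i] unfolding levi_logdet_def by simp
qed

lemma levi_eq_levi_logdet: "i \<in> Q0 \<Longrightarrow> levi (logdet Q0 Q1 h t n d i) x v = levi_logdet x v i"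
  using has_levi_0_ln_sum_minors[of i "1 / fact (d i)"]
  by (intro levi_eqI) (simp add: logdet_eq_ln_sum_minors)

lemma levi_gl_act_eq_levi_logdet:
  assumes i: "i \<in> Q0" and GL: "is_GL Q0 d g k"
  shows "levi (logdet Q0 Q1 h t n d i) (gl_act h t g k x) (gl_act h t g k v) = levi_logdet x v i"
  using has_levi_0_ln_sum_minors[OF i, of "(cmod (det (g i)))\<^sup>2 / fact (d i)"] det_GL_nonzero[OF GL i]
  by (intro levi_eqI) (simp add: logdet_padd_gl_act[OF stable_imp_wf_point[OF st] v GL i])

lemma levi_sum_eq_sum_levi_logdet:
  "levi (\<lambda>y. \<Sum>i\<in>Q0. logdet Q0 Q1 h t n d i y) x v = (\<Sum>i\<in>Q0. levi_logdet x v i)"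
proof (rule levi_eqI, rule has_levi_0_sum[OF finite_Q0], intro ballI)
  fix i assume "i \<in> Q0"
  then show "has_levi_0 (\<lambda>z. logdet Q0 Q1 h t n d i (padd x z v)) (levi_logdet x v i)"
    using has_levi_0_ln_sum_minors[of i "1 / fact (d i)"] by (simp add: logdet_eq_ln_sum_minors)
qed

lemma levi_logdet_nonneg: "levi_logdet x v i \<ge> 0"
  unfolding levi_logdet_def by (simp add: cs_defect_nonneg)

end

end

context acyclic_quiver
begin

lemma stable_mult_path_blocks_eq_0:
  assumes st: "stable Q0 Q1 h t n d x" and j: "j \<in> Q0" and M: "M \<in> carrier_mat p (d j)"
    and MB: "\<forall>\<gamma>\<in>paths_to Q0 Q1 h t j. M * path_block x \<gamma> = 0\<^sub>m p (n (fst \<gamma>))"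
  shows "M = 0\<^sub>m p (d j)"
proof (rule eq_matI)
  fix r s assume "r < dim_row (0\<^sub>m p (d j))" "s < dim_col (0\<^sub>m p (d j))"
  then have r: "r < p" and s: "s < d j" by auto
  have "annihilates x j (\<lambda>s. M $$ (r, s))" unfolding annihilates_def
  proof (intro ballI allI impI)
    fix \<gamma> k assume \<gamma>: "\<gamma> \<in> paths_to Q0 Q1 h t j" and k: "k < n (fst \<gamma>)"
    have "(\<Sum>s<d j. M $$ (r, s) * path_block x \<gamma> $$ (s, k)) = (M * path_block x \<gamma>) $$ (r, k)"
      using index_mult_mat_sum[OF M path_block_carrier[OF stable_imp_wf_point[OF st] \<gamma>] r k] by simp
    also have "\<dots> = 0" using MB \<gamma> r k by simp
    finally show "(\<Sum>s<d j. M $$ (r, s) * path_block x \<gamma> $$ (s, k)) = 0" .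
  qed
  then show "M $$ (r, s) = 0\<^sub>m p (d j) $$ (r, s)"
    using stable_annihilates_imp_zero[OF st j, of "\<lambda>s. M $$ (r, s)"] r s by simp
qed (use M in auto)

context
  fixes x v
  assumes x: "wf_point Q0 Q1 h t n d x" and v: "wf_point Q0 Q1 h t n d v"
begin

lemma path_block_deriv_eq_mult_iff:
  assumes \<xi>: "\<xi> \<in> carrier_mat (d i) (d i)"
  shows "(\<forall>\<gamma>\<in>paths_to Q0 Q1 h t i. path_block_deriv x v i \<gamma> = \<xi> * path_block x \<gamma>)
    \<longleftrightarrow> (\<forall>r<d i. \<forall>m\<in>rho_cols i.
          path_block_deriv x v i (fst m) $$ (r, snd m) = (\<Sum>l<d i. \<xi> $$ (r, l) * rho_entry x l m))"
proof -
  have "path_block_deriv x v i \<gamma> = \<xi> * path_block x \<gamma>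
      \<longleftrightarrow> (\<forall>r<d i. \<forall>c<n (fst \<gamma>). path_block_deriv x v i \<gamma> $$ (r, c)
            = (\<Sum>l<d i. \<xi> $$ (r, l) * path_block x \<gamma> $$ (l, c)))"
    if \<gamma>: "\<gamma> \<in> paths_to Q0 Q1 h t i" for \<gamma>
  proof -
    note B = path_block_carrier[OF x \<gamma>]
    have "path_block_deriv x v i \<gamma> = \<xi> * path_block x \<gamma>
        \<longleftrightarrow> (\<forall>r<d i. \<forall>c<n (fst \<gamma>). path_block_deriv x v i \<gamma> $$ (r, c) = (\<xi> * path_block x \<gamma>) $$ (r, c))"
      using path_block_deriv_carrier[OF x v \<gamma>] mult_carrier_mat[OF \<xi> B] by (rule mat_eq_iff_entries)
    then show ?thesis using index_mult_mat_sum[OF \<xi> B] by (simp del: index_mult_mat)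
  qed
  then show ?thesis unfolding rho_entry_def rho_cols_def by auto
qed

lemma levi_logdet_eq_0_iff:
  assumes st: "stable Q0 Q1 h t n d x" and i: "i \<in> Q0"
  shows "levi_logdet x v i = 0 \<longleftrightarrow> (\<exists>\<xi>\<in>carrier_mat (d i) (d i).
      \<forall>\<gamma>\<in>paths_to Q0 Q1 h t i. path_block_deriv x v i \<gamma> = \<xi> * path_block x \<gamma>)"
proof -
  let ?a1 = "\<lambda>r m. path_block_deriv x v i (fst m) $$ (r, snd m)"
  let ?D = "\<lambda>f. det_fun_dir (d i) (\<lambda>r s. rho_entry x r (f s)) (\<lambda>r s. ?a1 r (f s))"
  note S = sum_sq_minors_pos[OF st i]
  obtain f0 where f0: "f0 \<in> col_maps i" "minor (d i) (rho_entry x) f0 \<noteq> 0"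
    using ex_nonzero_minor[OF st i] .
  have "levi_logdet x v i = 0 \<longleftrightarrow> (\<exists>l. \<forall>f\<in>col_maps i. ?D f = l * minor (d i) (rho_entry x) f)"
    using S cs_defect_eq_0_iff[OF finite_col_maps S] deriv_minor[OF x v]
    unfolding levi_logdet_def by simp
  also have "\<dots> \<longleftrightarrow> (\<exists>\<xi>. \<forall>r<d i. \<forall>m\<in>rho_cols i. ?a1 r m = (\<Sum>l<d i. \<xi> r l * rho_entry x l m))"
    by (rule det_fun_dir_proportional_iff_rows_combination[OF f0])
  also have "\<dots> \<longleftrightarrow> (\<exists>\<xi>. \<forall>\<gamma>\<in>paths_to Q0 Q1 h t i.
      path_block_deriv x v i \<gamma> = mat (d i) (d i) (\<lambda>(r, l). \<xi> r l) * path_block x \<gamma>)"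
    by (simp add: path_block_deriv_eq_mult_iff)
  also have "\<dots> \<longleftrightarrow> (\<exists>\<xi>\<in>carrier_mat (d i) (d i).
      \<forall>\<gamma>\<in>paths_to Q0 Q1 h t i. path_block_deriv x v i \<gamma> = \<xi> * path_block x \<gamma>)"
    by (rule ex_carrier_mat_iff_ex_entries[symmetric])
  finally show ?thesis .
qed

lemma orbit_tangent_imp_path_block_deriv:
  assumes \<xi>: "\<forall>i\<in>Q0. \<xi> i \<in> carrier_mat (d i) (d i)"
    and V: "\<forall>a\<in>Q1. fst v a = \<xi> (h a) * fst x a - fst x a * \<xi> (t a)"
    and E: "\<forall>i\<in>Q0. snd v i = \<xi> i * snd x i"
  shows "(j, as) \<in> paths_to Q0 Q1 h t i \<Longrightarrow> path_block_deriv x v i (j, as) = \<xi> i * path_block x (j, as)"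
proof (induction as arbitrary: i rule: rev_induct)
  case Nil
  then have "j = i" "i \<in> Q0" by auto
  then show ?case using path_block_deriv_Nil[OF x v] path_block_Nil(2)[OF x] E by simp
next
  case (snoc a as)
  then have \<gamma>: "(j, as) \<in> paths_to Q0 Q1 h t (t a)" and a: "a \<in> Q1" and i: "i = h a"
    unfolding paths_to_snoc_iff by auto
  have ta: "t a \<in> Q0" and ha: "h a \<in> Q0" using arrows_in a by auto
  have "fst v a - (\<xi> (h a) * fst x a - fst x a * \<xi> (t a)) = 0\<^sub>m (d (h a)) (d (t a))"
    using V a diff_eq_0_mat_iff[OF wf_point_arrow[OF v a] wf_point_arrow[OF v a]] by simp
  then have "fst x a * (\<xi> (t a) * path_block x (j, as)) + fst v a * path_block x (j, as)
      = \<xi> (h a) * (fst x a * path_block x (j, as))"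
    using snoc_deriv_identity_iff[OF wf_point_arrow[OF x a] wf_point_arrow[OF v a] _ _
        path_block_carrier[OF x \<gamma>, simplified]] \<xi> ta ha
      left_mult_zero_mat[OF path_block_carrier[OF x \<gamma>, simplified]] by simp
  then show ?case
    using path_block_deriv_snoc[OF x v \<gamma> a] snoc.IH[OF \<gamma>] path_block_snoc(2)[OF x \<gamma> a] i by simp
qed

end

text \<open>Row independence of \<open>\<rho>\<^bsub>t(a)\<^esub>\<close> recovers \<open>v\<^sub>a\<close> from its action on the blocks of the
  paths ending with \<open>a\<close>.\<close>

lemma path_block_deriv_imp_arrow_tangent:
  assumes st: "stable Q0 Q1 h t n d x" and v: "wf_point Q0 Q1 h t n d v"
    and \<xi>: "\<forall>i\<in>Q0. \<xi> i \<in> carrier_mat (d i) (d i)"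
    and D: "\<forall>i\<in>Q0. \<forall>\<gamma>\<in>paths_to Q0 Q1 h t i. path_block_deriv x v i \<gamma> = \<xi> i * path_block x \<gamma>"
    and a: "a \<in> Q1"
  shows "fst v a = \<xi> (h a) * fst x a - fst x a * \<xi> (t a)"
proof -
  note x = stable_imp_wf_point[OF st]
  have ta: "t a \<in> Q0" and ha: "h a \<in> Q0" using arrows_in a by auto
  let ?T = "\<xi> (h a) * fst x a - fst x a * \<xi> (t a)"
  have T: "?T \<in> carrier_mat (d (h a)) (d (t a))"
    using \<xi> ta ha wf_point_arrow[OF x a] by (intro minus_carrier_mat) (auto intro: mult_carrier_mat)
  have "(fst v a - ?T) * path_block x (j, as) = 0\<^sub>m (d (h a)) (n j)"
    if \<gamma>: "(j, as) \<in> paths_to Q0 Q1 h t (t a)" for j as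
  proof -
    have "fst x a * (\<xi> (t a) * path_block x (j, as)) + fst v a * path_block x (j, as)
        = \<xi> (h a) * (fst x a * path_block x (j, as))"
      using path_block_deriv_snoc[OF x v \<gamma> a] D ta ha \<gamma> path_block_snoc[OF x \<gamma> a] by simp
    then show ?thesis
      using snoc_deriv_identity_iff[OF wf_point_arrow[OF x a] wf_point_arrow[OF v a] _ _
          path_block_carrier[OF x \<gamma>, simplified]] \<xi> ta ha by simp
  qed
  then have "fst v a - ?T = 0\<^sub>m (d (h a)) (d (t a))"
    using minus_carrier_mat[OF T] by (intro stable_mult_path_blocks_eq_0[OF st ta]) auto
  then show ?thesis
    using diff_eq_0_mat_iff[OF wf_point_arrow[OF v a] T] by simp
qed

lemma orbit_tangent_iff_path_block_deriv:
  assumes st: "stable Q0 Q1 h t n d x" and v: "wf_point Q0 Q1 h t n d v"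
  shows "in_orbit_tangent Q0 Q1 h t d x v \<longleftrightarrow> (\<exists>\<xi>. (\<forall>i\<in>Q0. \<xi> i \<in> carrier_mat (d i) (d i))
     \<and> (\<forall>i\<in>Q0. \<forall>\<gamma>\<in>paths_to Q0 Q1 h t i. path_block_deriv x v i \<gamma> = \<xi> i * path_block x \<gamma>))"
    (is "_ \<longleftrightarrow> (\<exists>\<xi>. ?carrier \<xi> \<and> ?deriv \<xi>)")
proof
  note x = stable_imp_wf_point[OF st]
  assume "in_orbit_tangent Q0 Q1 h t d x v"
  then obtain \<xi> where \<xi>: "?carrier \<xi>"
    and V: "\<forall>a\<in>Q1. fst v a = \<xi> (h a) * fst x a - fst x a * \<xi> (t a)"
    and E: "\<forall>i\<in>Q0. snd v i = \<xi> i * snd x i"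
    unfolding in_orbit_tangent_def by blast
  then have "?deriv \<xi>" using orbit_tangent_imp_path_block_deriv[OF x v \<xi> V E] by auto
  with \<xi> show "\<exists>\<xi>. ?carrier \<xi> \<and> ?deriv \<xi>" by blast
next
  note x = stable_imp_wf_point[OF st]
  assume "\<exists>\<xi>. ?carrier \<xi> \<and> ?deriv \<xi>"
  then obtain \<xi> where \<xi>: "?carrier \<xi>" and D: "?deriv \<xi>" by blast
  have "\<forall>i\<in>Q0. snd v i = \<xi> i * snd x i"
    using D path_block_Nil[OF x] path_block_deriv_Nil[OF x v] by force
  moreover have "\<forall>a\<in>Q1. fst v a = \<xi> (h a) * fst x a - fst x a * \<xi> (t a)"
    using path_block_deriv_imp_arrow_tangent[OF st v \<xi> D] by blast
  ultimately show "in_orbit_tangent Q0 Q1 h t d x v" unfolding in_orbit_tangent_def using \<xi> by blast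
qed

lemma sum_levi_logdet_eq_0_iff:
  assumes st: "stable Q0 Q1 h t n d x" and v: "wf_point Q0 Q1 h t n d v"
  shows "(\<Sum>i\<in>Q0. levi_logdet x v i) = 0 \<longleftrightarrow> in_orbit_tangent Q0 Q1 h t d x v"
proof -
  have "(\<Sum>i\<in>Q0. levi_logdet x v i) = 0 \<longleftrightarrow> (\<forall>i\<in>Q0. levi_logdet x v i = 0)"
    using finite_Q0 levi_logdet_nonneg[OF st v] by (intro sum_nonneg_eq_0_iff) auto
  also have "\<dots> \<longleftrightarrow> (\<forall>i\<in>Q0. \<exists>\<xi>. \<xi> \<in> carrier_mat (d i) (d i)
      \<and> (\<forall>\<gamma>\<in>paths_to Q0 Q1 h t i. path_block_deriv x v i \<gamma> = \<xi> * path_block x \<gamma>))"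
    using levi_logdet_eq_0_iff[OF stable_imp_wf_point[OF st] v st] by blast
  also have "\<dots> \<longleftrightarrow> (\<exists>\<xi>. (\<forall>i\<in>Q0. \<xi> i \<in> carrier_mat (d i) (d i))
      \<and> (\<forall>i\<in>Q0. \<forall>\<gamma>\<in>paths_to Q0 Q1 h t i. path_block_deriv x v i \<gamma> = \<xi> i * path_block x \<gamma>))"
    by (auto dest!: bchoice)
  also have "\<dots> \<longleftrightarrow> in_orbit_tangent Q0 Q1 h t d x v"
    using orbit_tangent_iff_path_block_deriv[OF st v] by simp
  finally show ?thesis .
qed

end

theorem theorem3:
  fixes Q0 :: "'v set" and Q1 :: "'e set" and h t :: "'e \<Rightarrow> 'v" and n d :: "'v \<Rightarrow> nat"
  assumes "finite Q0" and "finite Q1"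
    and "\<forall>a\<in>Q1. h a \<in> Q0 \<and> t a \<in> Q0"
    and "no_oriented_cycle Q0 Q1 h t"
  shows
    "(\<forall>i\<in>Q0. \<forall>x v g k. stable Q0 Q1 h t n d x \<and> wf_point Q0 Q1 h t n d v \<and> is_GL Q0 d g k \<longrightarrow>
         levi (logdet Q0 Q1 h t n d i) (gl_act h t g k x) (gl_act h t g k v)
           = levi (logdet Q0 Q1 h t n d i) x v)
   \<and> (\<forall>i\<in>Q0. \<forall>x v. stable Q0 Q1 h t n d x \<and> wf_point Q0 Q1 h t n d v \<longrightarrow>
         levi (logdet Q0 Q1 h t n d i) x v \<ge> 0)
   \<and> (\<forall>x v. stable Q0 Q1 h t n d x \<and> wf_point Q0 Q1 h t n d v \<longrightarrow>
         (levi (\<lambda>y. \<Sum>i\<in>Q0. logdet Q0 Q1 h t n d i y) x v = 0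
            \<longleftrightarrow> in_orbit_tangent Q0 Q1 h t d x v))"
proof -
  interpret acyclic_quiver Q0 Q1 h t n d using assms by unfold_locales
  have "levi (logdet Q0 Q1 h t n d i) (gl_act h t g k x) (gl_act h t g k v) = levi (logdet Q0 Q1 h t n d i) x v"
    if "i \<in> Q0" "stable Q0 Q1 h t n d x" "wf_point Q0 Q1 h t n d v" "is_GL Q0 d g k" for i x v g k
    using levi_gl_act_eq_levi_logdet[OF that(2,3,1,4)] levi_eq_levi_logdet[OF that(2,3,1)] by simp
  moreover have "levi (logdet Q0 Q1 h t n d i) x v \<ge> 0"
    if "i \<in> Q0" "stable Q0 Q1 h t n d x" "wf_point Q0 Q1 h t n d v" for i x v
    using levi_eq_levi_logdet[OF that(2,3,1)] levi_logdet_nonneg[OF that(2,3)] by simp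
  moreover have "levi (\<lambda>y. \<Sum>i\<in>Q0. logdet Q0 Q1 h t n d i y) x v = 0 \<longleftrightarrow> in_orbit_tangent Q0 Q1 h t d x v"
    if "stable Q0 Q1 h t n d x" "wf_point Q0 Q1 h t n d v" for x v
    using levi_sum_eq_sum_levi_logdet[OF that] sum_levi_logdet_eq_0_iff[OF that] by simp
  ultimately show ?thesis by blast
qed

end
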